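(* Let $\mathcal{T}=(V,A,E,f,q,v_0)$ be a decorated rooted tree with $n=\delta_{v_0}>0$, and let $\mathcal{T}_i=(V_i,A_i,E_i,f_i,q_i)$, $1\le i\le n$, be the decorated trees attached to $\mathcal{T}$ as described in the context, with $A_{0,i}=\{\alpha\in A_i: f_i(\alpha)=0\}$. For each $x\in(V\setminus\{v_0\})\cup A_0$, $$N_x+N^{(i)}_x=\phi(v_0,x)\deg(\mathcal{T}),$$ where $i$ is the unique element of $\{1,\dots,n\}$ with $x\in V_i\cup(A_{0,i}\setminus\{\alpha_i\})$, $N_x$ is computed in $\mathcal{T}$ and $N^{(i)}_x$ in $\mathcal{T}_i$.
   Context: A graph is a pair $(X_0,X_1)$ of finite sets such that each element of $X_1$ (an edge) is a $2$-element subset of $X_0$; elements of $X_0$ are cells. The valency $\delta_x$ of a cell is the number of edges containing it. A path is a tuple $(x_0,\dots,x_n)$ ($n\ge0$) of cells with $\{x_i,x_{i+1}\}$ an edge for each $i<n$, these edges pairwise distinct; a cell/edge is in the path if it is some $x_i$ / some $\{x_i,x_{i+1}\}$. The graph is a tree if any two cells $x,y$ are joined by a unique path $\gamma_{x,y}$. A decorated tree is $(V,A,E,f,q)$ with $V$ (vertices), $A$ (arrows) finite disjoint sets, $(V\cup A,E)$ a tree, every arrow of valency $1$, $f:A\to\mathbb{Z}$, $q(e,x)\in\mathbb{Z}$ for each $e\in E$, $x\in e$, with $q(e,\alpha)=1$ for $\alpha\in A$, and for each $v\in V$ and distinct edges $e,e'\ni v$, $\gcd(q(e,v),q(e',v))=1$.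 $A_0=\{\alpha\in A:f(\alpha)=0\}$. For $x\in V\cup A$, $e\ni x$: $Q(e,x)=\prod q(e',x)$ over edges $e'\ne e$ containing $x$ (empty product $=1$); for an edge $e=\{x,y\}$, $\det(e)=q(e,x)q(e,y)-Q(e,x)Q(e,y)$. An edge $\varepsilon$ is incident to a path $\gamma$ if it is not in $\gamma$ but contains a cell $u$ of $\gamma$; $q(\varepsilon,\gamma):=q(\varepsilon,u)$. For $v\ne\alpha$, $v\in V\cup A$, $\alpha\in A$: $x_{v,\alpha}=f(\alpha)\prod_\varepsilon q(\varepsilon,\gamma_{v,\alpha})$ over edges incident to $\gamma_{v,\alpha}$. For $v\in V\cup A_0$, $N_v=\sum_{\alpha\in A\setminus A_0}x_{v,\alpha}$. For a path $\gamma=(x_0,\dots,x_m)$, $m\ge1$, $\phi(\gamma)$ is the product of $q(e,u)$ over all pairs with $u\in\{x_1,\dots,x_m\}$ and $e$ an edge containing $u$ not in $\gamma$; $\phi(x,y)=\phi(\gamma_{x,y})$ for $x\ne y$. A root of $(V,A,E,f,q)$ is a vertex $v_0$ with $q(e,v_0)=1$ for every edge $e\ni v_0$ such that for every $v\in V\setminus\{v_0\}$, all edges $e\ni v$ not in $\gamma_{v_0,v}$ satisfy $q(e,v)\ge1$ and at most one of them satisfies $q(e,v)\ne1$. A decorated rooted tree is $(V,A,E,f,q,v_0)$ with $v_0$ a root. $\deg(\mathcal{T})$ denotes $N_{v_0}$. Central elements: a path $(w_1,\dots,w_m)$, $m\ge2$, satisfies $(+)$ if every edge $e\ni w_m$ other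 than $\{w_{m-1},w_m\}$ has $q(e,w_m)\ge1$ and at most one such edge has $q(e,w_m)>1$; $\eta\in V\cup A$ is central if $\gamma_{\eta,v}$ satisfies $(+)$ for every $v\in V\setminus\{\eta\}$. For a decorated tree $\mathcal{S}=(V,A,E,f,q)$ and central $\eta$, $\mathcal{S}^{(\eta)}$ is the unique decorated tree $(V,A,E,f,q^* )$ (such a unique tree exists) with: $q^*(e,\eta)=q(e,\eta)$ for $e\ni\eta$; $q^*(e,v)=q(e,v)$ for $v\in V\setminus\{\eta\}$ and edges $e\ni v$ not in $\gamma_{\eta,v}$; $q^*(e,v)=Q(e,v)-q(e,v)$ for every edge $e=\{\eta,v\}$ with $v\in V$; $\det^*(e)=-\det(e)$ for every edge $e=\{u,v\}$ with $u,v\in V\setminus\{\eta\}$. The trees $\mathcal{T}_i$: let $v_1,\dots,v_n$ be the distinct cells adjacent to $v_0$, $e_i=\{v_0,v_i\}$. Delete $e_1,\dots,e_n$; let $\mathcal{C}_i$ be the component containing $v_i$. Let $\mathcal{T}'_i$ be obtained from $\mathcal{C}_i$ by adding an arrow $\alpha_i$ with $f(\alpha_i)=0$ and an edge $\{\alpha_i,v_i\}$ decorated $q(e_i,v_i)$ near $v_i$ and $1$ near $\alpha_i$. Then $\alpha_i$ is central in $\mathcal{T}'_i$ and $\mathcal{T}_i:=(\mathcal{T}'_i)^{(\alpha_i)}$. *)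

theory Defs
  imports Main
begin

definition graph :: "'a set \<Rightarrow> 'a set set \<Rightarrow> bool" where
  "graph X0 X1 \<longleftrightarrow> finite X0 \<and> finite X1 \<and> (\<forall>e\<in>X1. e \<subseteq> X0 \<and> card e = 2)"

definition valency :: "'a set set \<Rightarrow> 'a \<Rightarrow> nat" where
  "valency X1 x = card {e\<in>X1. x \<in> e}"

definition path_edges :: "'a list \<Rightarrow> 'a set set" where
  "path_edges p = {{p ! i, p ! Suc i} | i. i < length p - 1}"

definition is_path :: "'a set \<Rightarrow> 'a set set \<Rightarrow> 'a list \<Rightarrow> bool" where
  "is_path X0 X1 p \<longleftrightarrow> p \<noteq> [] \<and> set p \<subseteq> X0 \<and>
     (\<forall>i < length p - 1. {p ! i, p ! Suc i} \<in> X1) \<and>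
     distinct (map (\<lambda>i. {p ! i, p ! Suc i}) [0..<length p - 1])"

definition is_tree :: "'a set \<Rightarrow> 'a set set \<Rightarrow> bool" where
  "is_tree X0 X1 \<longleftrightarrow> graph X0 X1 \<and>
     (\<forall>x\<in>X0. \<forall>y\<in>X0. \<exists>!p. is_path X0 X1 p \<and> hd p = x \<and> last p = y)"

definition gpath :: "'a set \<Rightarrow> 'a set set \<Rightarrow> 'a \<Rightarrow> 'a \<Rightarrow> 'a list" where
  "gpath X0 X1 x y = (THE p. is_path X0 X1 p \<and> hd p = x \<and> last p = y)"

definition decorated_tree ::
  "'a set \<Rightarrow> 'a set \<Rightarrow> 'a set set \<Rightarrow> ('a \<Rightarrow> int) \<Rightarrow> ('a set \<Rightarrow> 'a \<Rightarrow> int) \<Rightarrow> bool" where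
  "decorated_tree V A E f q \<longleftrightarrow>
     finite V \<and> finite A \<and> V \<inter> A = {} \<and> is_tree (V \<union> A) E \<and>
     (\<forall>\<alpha>\<in>A. valency E \<alpha> = 1) \<and>
     (\<forall>e\<in>E. \<forall>\<alpha>\<in>A. \<alpha> \<in> e \<longrightarrow> q e \<alpha> = 1) \<and>
     (\<forall>v\<in>V. \<forall>e\<in>E. \<forall>e'\<in>E. v \<in> e \<longrightarrow> v \<in> e' \<longrightarrow> e \<noteq> e' \<longrightarrow> gcd (q e v) (q e' v) = 1)"

definition A0 :: "'a set \<Rightarrow> ('a \<Rightarrow> int) \<Rightarrow> 'a set" where
  "A0 A f = {\<alpha>\<in>A. f \<alpha> = 0}"

definition Qd :: "'a set set \<Rightarrow> ('a set \<Rightarrow> 'a \<Rightarrow> int) \<Rightarrow> 'a set \<Rightarrow> 'a \<Rightarrow> int" where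
  "Qd E q e x = (\<Prod>e'\<in>{e'\<in>E. x \<in> e' \<and> e' \<noteq> e}. q e' x)"

definition detd :: "'a set set \<Rightarrow> ('a set \<Rightarrow> 'a \<Rightarrow> int) \<Rightarrow> 'a \<Rightarrow> 'a \<Rightarrow> int" where
  "detd E q x y = q {x,y} x * q {x,y} y - Qd E q {x,y} x * Qd E q {x,y} y"

definition incident_edges :: "'a set set \<Rightarrow> 'a list \<Rightarrow> 'a set set" where
  "incident_edges E p = {\<epsilon>\<in>E. \<epsilon> \<notin> path_edges p \<and> (\<exists>u\<in>set p. u \<in> \<epsilon>)}"

definition q_path :: "('a set \<Rightarrow> 'a \<Rightarrow> int) \<Rightarrow> 'a set \<Rightarrow> 'a list \<Rightarrow> int" where
  "q_path q \<epsilon> p = q \<epsilon> (THE u. u \<in> set p \<and> u \<in> \<epsilon>)"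

definition xva ::
  "'a set \<Rightarrow> 'a set \<Rightarrow> 'a set set \<Rightarrow> ('a \<Rightarrow> int) \<Rightarrow> ('a set \<Rightarrow> 'a \<Rightarrow> int) \<Rightarrow> 'a \<Rightarrow> 'a \<Rightarrow> int" where
  "xva V A E f q v \<alpha> =
     (let \<gamma> = gpath (V \<union> A) E v \<alpha> in f \<alpha> * (\<Prod>\<epsilon>\<in>incident_edges E \<gamma>. q_path q \<epsilon> \<gamma>))"

definition Nd ::
  "'a set \<Rightarrow> 'a set \<Rightarrow> 'a set set \<Rightarrow> ('a \<Rightarrow> int) \<Rightarrow> ('a set \<Rightarrow> 'a \<Rightarrow> int) \<Rightarrow> 'a \<Rightarrow> int" where
  "Nd V A E f q v = (\<Sum>\<alpha>\<in>A - A0 A f. xva V A E f q v \<alpha>)"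

definition phi_path :: "'a set set \<Rightarrow> ('a set \<Rightarrow> 'a \<Rightarrow> int) \<Rightarrow> 'a list \<Rightarrow> int" where
  "phi_path E q p =
     (\<Prod>(u, e)\<in>{(u, e). u \<in> set (tl p) \<and> e \<in> E \<and> u \<in> e \<and> e \<notin> path_edges p}. q e u)"

definition phid ::
  "'a set \<Rightarrow> 'a set \<Rightarrow> 'a set set \<Rightarrow> ('a set \<Rightarrow> 'a \<Rightarrow> int) \<Rightarrow> 'a \<Rightarrow> 'a \<Rightarrow> int" where
  "phid V A E q x y = phi_path E q (gpath (V \<union> A) E x y)"

definition is_root ::
  "'a set \<Rightarrow> 'a set \<Rightarrow> 'a set set \<Rightarrow> ('a set \<Rightarrow> 'a \<Rightarrow> int) \<Rightarrow> 'a \<Rightarrow> bool" where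
  "is_root V A E q v0 \<longleftrightarrow> v0 \<in> V \<and> (\<forall>e\<in>E. v0 \<in> e \<longrightarrow> q e v0 = 1) \<and>
     (\<forall>v\<in>V - {v0}.
        (\<forall>e\<in>E. v \<in> e \<and> e \<notin> path_edges (gpath (V \<union> A) E v0 v) \<longrightarrow> q e v \<ge> 1) \<and>
        card {e\<in>E. v \<in> e \<and> e \<notin> path_edges (gpath (V \<union> A) E v0 v) \<and> q e v \<noteq> 1} \<le> 1)"

definition degT ::
  "'a set \<Rightarrow> 'a set \<Rightarrow> 'a set set \<Rightarrow> ('a \<Rightarrow> int) \<Rightarrow> ('a set \<Rightarrow> 'a \<Rightarrow> int) \<Rightarrow> 'a \<Rightarrow> int" where
  "degT V A E f q v0 = Nd V A E f q v0"

text \<open>qs is the decoration q* of S^(eta), where S = (V,A,E,f,q).\<close>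
definition is_eta_transform ::
  "'a set \<Rightarrow> 'a set \<Rightarrow> 'a set set \<Rightarrow> ('a \<Rightarrow> int) \<Rightarrow> ('a set \<Rightarrow> 'a \<Rightarrow> int) \<Rightarrow> 'a
   \<Rightarrow> ('a set \<Rightarrow> 'a \<Rightarrow> int) \<Rightarrow> bool" where
  "is_eta_transform V A E f q \<eta> qs \<longleftrightarrow>
     decorated_tree V A E f qs \<and>
     (\<forall>e\<in>E. \<eta> \<in> e \<longrightarrow> qs e \<eta> = q e \<eta>) \<and>
     (\<forall>v\<in>V - {\<eta>}. \<forall>e\<in>E. v \<in> e \<and> e \<notin> path_edges (gpath (V \<union> A) E \<eta> v) \<longrightarrow> qs e v = q e v) \<and>
     (\<forall>v\<in>V. {\<eta>, v} \<in> E \<longrightarrow> qs {\<eta>, v} v = Qd E q {\<eta>, v} v - q {\<eta>, v} v) \<and>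
     (\<forall>u\<in>V - {\<eta>}. \<forall>v\<in>V - {\<eta>}. {u, v} \<in> E \<longrightarrow> detd E qs u v = - detd E q u v)"

text \<open>For a neighbour u = v_i of v0: the component C_i containing u after deleting
  all edges at v0, extended by a fresh arrow \<alpha> = \<alpha>_i.\<close>
definition comp_cells :: "'a set set \<Rightarrow> 'a \<Rightarrow> 'a \<Rightarrow> 'a set" where
  "comp_cells E v0 u = {y. (u, y) \<in> {(a, b). {a, b} \<in> E \<and> v0 \<notin> {a, b}}\<^sup>*}"

definition att_V :: "'a set \<Rightarrow> 'a set set \<Rightarrow> 'a \<Rightarrow> 'a \<Rightarrow> 'a set" where
  "att_V V E v0 u = V \<inter> comp_cells E v0 u"

definition att_A :: "'a set \<Rightarrow> 'a set set \<Rightarrow> 'a \<Rightarrow> 'a \<Rightarrow> 'a \<Rightarrow> 'a set" where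
  "att_A A E v0 u \<alpha> = (A \<inter> comp_cells E v0 u) \<union> {\<alpha>}"

definition att_E :: "'a set set \<Rightarrow> 'a \<Rightarrow> 'a \<Rightarrow> 'a \<Rightarrow> 'a set set" where
  "att_E E v0 u \<alpha> = {e\<in>E. v0 \<notin> e \<and> e \<subseteq> comp_cells E v0 u} \<union> {{\<alpha>, u}}"

definition att_f :: "('a \<Rightarrow> int) \<Rightarrow> 'a \<Rightarrow> 'a \<Rightarrow> int" where
  "att_f f \<alpha> = f(\<alpha> := 0)"

definition att_q' :: "('a set \<Rightarrow> 'a \<Rightarrow> int) \<Rightarrow> 'a \<Rightarrow> 'a \<Rightarrow> 'a \<Rightarrow> 'a set \<Rightarrow> 'a \<Rightarrow> int" where
  "att_q' q v0 u \<alpha> = (\<lambda>e x. if e = {\<alpha>, u} then (if x = \<alpha> then 1 else q {v0, u} u) else q e x)"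

text \<open>qs is the decoration of T_i = (T'_i)^(\<alpha>_i).\<close>
definition att_q ::
  "'a set \<Rightarrow> 'a set \<Rightarrow> 'a set set \<Rightarrow> ('a \<Rightarrow> int) \<Rightarrow> ('a set \<Rightarrow> 'a \<Rightarrow> int) \<Rightarrow> 'a \<Rightarrow> 'a \<Rightarrow> 'a
   \<Rightarrow> ('a set \<Rightarrow> 'a \<Rightarrow> int) \<Rightarrow> bool" where
  "att_q V A E f q v0 u \<alpha> qs \<longleftrightarrow>
     is_eta_transform (att_V V E v0 u) (att_A A E v0 u \<alpha>) (att_E E v0 u \<alpha>) (att_f f \<alpha>)
       (att_q' q v0 u \<alpha>) \<alpha> qs"

end

(*
  Write gamma y for the path from v0 to y and C for the component of v_i = u once the edges at v0
  are cut.  Both sides are sums, over the arrows beta with nonzero f beta, of f beta times the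
  product of the decorations of the edges incident to a path ending at beta.  If beta lies outside
  C, the path from x to beta is gamma x reversed followed by gamma beta; all decorations at v0 are 1,
  so the term of N_x is phi(v0, x) times the term of N_v0, and beta does not occur in T_i.  If beta
  lies in C, then gamma x and gamma beta part at a vertex m of C, and the path from x to beta is the
  same in T and in T_i.  The two terms differ only in the decoration at m of the edge towards the
  root, and the sum of these two decorations is the square of phi(v0, m) without its factor at m,
  times the product of the other decorations at m.  This identity is proved by induction along the
  path from u to m: each step is the relation det*(e) = - det(e) of T_i = (T'_i)^(alpha) on the
  edge e from a vertex to its parent, and the root condition makes the decoration that has to be
  cancelled nonzero.
*)

theory Submission
  imports Defs
begin

section \<open>Paths as lists of cells\<close>

fun edge_list :: "'a list \<Rightarrow> 'a set list" where
  "edge_list (x # y # p) = {x, y} # edge_list (y # p)"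
| "edge_list _ = []"

lemma last_take_Suc: "k < length p \<Longrightarrow> last (take (Suc k) p) = p ! k"
  by (simp add: take_Suc_conv_app_nth)

lemma length_ge_2_if_hd_neq_last: "p \<noteq> [] \<Longrightarrow> hd p \<noteq> last p \<Longrightarrow> 2 \<le> length p"
  by (cases p) (auto simp: Suc_le_eq split: if_splits)

lemma set_drop_conv_insert_nth:
  "k < length p \<Longrightarrow> set (drop k p) = insert (p ! k) (set (drop (Suc k) p))"
  by (simp flip: Cons_nth_drop_Suc)

lemma edge_list_conv_nth: "edge_list p = map (\<lambda>i. {p ! i, p ! Suc i}) [0..<length p - 1]"
proof (induction p rule: edge_list.induct)
  case (1 x y p)
  have "[0..<length (x # y # p) - 1] = 0 # map Suc [0..<length (y # p) - 1]"
    by (simp add: upt_conv_Cons map_Suc_upt del: upt_Suc)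
  then show ?case using 1 by simp
qed auto

lemma path_edges_eq_set_edge_list: "path_edges p = set (edge_list p)"
  unfolding path_edges_def edge_list_conv_nth by auto

lemma is_path_iff_edge_list:
  "is_path X0 E p \<longleftrightarrow> p \<noteq> [] \<and> set p \<subseteq> X0 \<and> set (edge_list p) \<subseteq> E \<and> distinct (edge_list p)"
  unfolding is_path_def edge_list_conv_nth by auto

lemma length_edge_list: "length (edge_list p) = length p - 1"
  by (simp add: edge_list_conv_nth)

lemma nth_edge_list: "Suc i < length p \<Longrightarrow> edge_list p ! i = {p ! i, p ! Suc i}"
  unfolding edge_list_conv_nth by (subst nth_map) (auto simp: nth_upt)

lemma edge_list_Cons: "edge_list (x # p) = (if p = [] then [] else {x, hd p} # edge_list p)"
  by (cases p) auto

lemma edge_list_append_tl: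
  "p \<noteq> [] \<Longrightarrow> r \<noteq> [] \<Longrightarrow> last p = hd r \<Longrightarrow> edge_list (p @ tl r) = edge_list p @ edge_list r"
  by (induction p rule: edge_list.induct) (auto simp: edge_list_Cons)

lemma edge_list_snoc: "p \<noteq> [] \<Longrightarrow> edge_list (p @ [z]) = edge_list p @ [{last p, z}]"
  using edge_list_append_tl[of p "[last p, z]"] by simp

lemma edge_list_rev: "edge_list (rev p) = rev (edge_list p)"
proof (induction p rule: edge_list.induct)
  case (1 x y p)
  have "edge_list (rev (x # y # p)) = edge_list (rev (y # p) @ tl [y, x])" by simp
  also have "\<dots> = edge_list (rev (y # p)) @ edge_list [y, x]"
    by (rule edge_list_append_tl) (auto simp: last_rev)
  finally show ?case using 1 by (auto simp: insert_commute)
qed auto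

lemma edge_list_drop: "edge_list (drop n p) = drop n (edge_list p)"
proof (induction p arbitrary: n rule: edge_list.induct)
  case (1 x y p)
  then show ?case by (cases n) auto
next
  case ("2_2" x n)
  then show ?case by (cases n) auto
qed simp

lemma edge_list_take: "edge_list (take (Suc n) p) = take n (edge_list p)"
  by (induction p arbitrary: n rule: edge_list.induct) (auto simp: take_Cons')

lemma edge_list_subset: "e \<in> set (edge_list p) \<Longrightarrow> e \<subseteq> set p"
  by (induction p rule: edge_list.induct) auto

lemma set_edge_list_take_drop:
  assumes "k < length p"
  shows "set (edge_list p) = set (edge_list (take (Suc k) p)) \<union> set (edge_list (drop k p))"
proof -
  have dk: "drop k p = p ! k # drop (Suc k) p" using assms by (simp add: Cons_nth_drop_Suc)
  have "edge_list (take (Suc k) p @ tl (drop k p))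
      = edge_list (take (Suc k) p) @ edge_list (drop k p)"
    by (rule edge_list_append_tl) (use assms dk in \<open>auto simp: last_take_Suc\<close>)
  moreover have "p = take (Suc k) p @ tl (drop k p)" using dk by simp
  ultimately show ?thesis by (metis set_append)
qed

lemma edge_list_last_cell:
  "distinct p \<Longrightarrow> \<epsilon> \<in> set (edge_list p) \<Longrightarrow> last p \<in> \<epsilon> \<Longrightarrow> \<epsilon> = {last (butlast p), last p}"
proof (induction p rule: edge_list.induct)
  case (1 x y r)
  show ?case
  proof (cases "\<epsilon> = {x, y}")
    case True
    have "x \<noteq> last (y # r)" using 1(2) by (metis distinct.simps(2) last_in_set list.distinct(1))
    then have "last (y # r) = y" using 1(4) True by auto
    then have "r = []" using 1(2) by (metis distinct.simps(2) last.simps last_in_set)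
    then show ?thesis using True by simp
  next
    case False
    then have "\<epsilon> \<in> set (edge_list (y # r))" using 1(3) by simp
    moreover from this have "r \<noteq> []" by (cases r) auto
    ultimately show ?thesis using 1 by (cases r) auto
  qed
qed auto

lemma is_path_take: "is_path X0 E p \<Longrightarrow> 0 < n \<Longrightarrow> is_path X0 E (take n p)"
  unfolding is_path_iff_edge_list by (cases n) (auto simp: edge_list_take dest: in_set_takeD)

lemma is_path_drop: "is_path X0 E p \<Longrightarrow> n < length p \<Longrightarrow> is_path X0 E (drop n p)"
  unfolding is_path_iff_edge_list by (auto simp: edge_list_drop dest: in_set_dropD)

lemma is_path_rev: "is_path X0 E p \<Longrightarrow> is_path X0 E (rev p)"
  unfolding is_path_iff_edge_list by (auto simp: edge_list_rev)

lemma is_path_singleton: "x \<in> X0 \<Longrightarrow> is_path X0 E [x]"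
  unfolding is_path_iff_edge_list by auto

lemma is_path_append_tl:
  "is_path X0 E p \<Longrightarrow> is_path X0 E r \<Longrightarrow> last p = hd r \<Longrightarrow>
   set (edge_list p) \<inter> set (edge_list r) = {} \<Longrightarrow> is_path X0 E (p @ tl r)"
  unfolding is_path_iff_edge_list by (auto simp: edge_list_append_tl dest: list.set_sel(2))

lemma is_path_snoc:
  "is_path X0 E p \<Longrightarrow> z \<in> X0 \<Longrightarrow> {last p, z} \<in> E \<Longrightarrow> {last p, z} \<notin> set (edge_list p) \<Longrightarrow>
   is_path X0 E (p @ [z])"
  unfolding is_path_iff_edge_list by (auto simp: edge_list_snoc)

lemma is_path_Cons:
  "is_path X0 E p \<Longrightarrow> z \<in> X0 \<Longrightarrow> {z, hd p} \<in> E \<Longrightarrow> {z, hd p} \<notin> set (edge_list p) \<Longrightarrow>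
   is_path X0 E (z # p)"
  unfolding is_path_iff_edge_list by (auto simp: edge_list_Cons)

lemma is_path_edge: "is_path X0 E p \<Longrightarrow> Suc i < length p \<Longrightarrow> {p ! i, p ! Suc i} \<in> E"
  unfolding is_path_def by simp

lemma valency_interior_ge_2:
  assumes p: "is_path X0 E p" and fin: "finite E" and i: "0 < i" "Suc i < length p"
  shows "2 \<le> valency E (p ! i)"
proof -
  have d: "distinct (edge_list p)" using p by (simp add: is_path_iff_edge_list)
  have "edge_list p ! (i - 1) \<noteq> edge_list p ! i"
    using i by (simp add: nth_eq_iff_index_eq[OF d] length_edge_list)
  then have ne: "{p ! (i - 1), p ! i} \<noteq> {p ! i, p ! Suc i}" using i by (simp add: nth_edge_list)
  have "{p ! (i - 1), p ! i} \<in> E" "{p ! i, p ! Suc i} \<in> E"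
    using is_path_edge[OF p, of "i - 1"] is_path_edge[OF p, of i] i by simp_all
  then have "{{p ! (i - 1), p ! i}, {p ! i, p ! Suc i}} \<subseteq> {e\<in>E. p ! i \<in> e}" by auto
  from card_mono[OF _ this] fin ne show ?thesis unfolding valency_def by simp
qed

section \<open>Paths in trees\<close>

lemma tree_finite_edges: "is_tree X0 E \<Longrightarrow> finite E"
  by (simp add: is_tree_def graph_def)

lemma tree_edge_card: "is_tree X0 E \<Longrightarrow> e \<in> E \<Longrightarrow> card e = 2 \<and> e \<subseteq> X0"
  by (auto simp: is_tree_def graph_def)

lemma tree_edge_ends_distinct: "is_tree X0 E \<Longrightarrow> {a, b} \<in> E \<Longrightarrow> a \<noteq> b"
  using tree_edge_card by fastforce

lemma tree_edge_eq:
  assumes "is_tree X0 E" "e \<in> E" "a \<in> e" "b \<in> e" "a \<noteq> b"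
  shows "e = {a, b}"
  using tree_edge_card[OF assms(1,2)] assms(3-5) by (auto simp: card_2_iff)

lemma gpath_is_path:
  assumes "is_tree X0 E" "x \<in> X0" "y \<in> X0"
  shows "is_path X0 E (gpath X0 E x y) \<and> hd (gpath X0 E x y) = x \<and> last (gpath X0 E x y) = y"
proof -
  from assms have "\<exists>!p. is_path X0 E p \<and> hd p = x \<and> last p = y" unfolding is_tree_def by blast
  then show ?thesis unfolding gpath_def by (rule theI')
qed

lemma gpath_eq:
  assumes "is_tree X0 E" "is_path X0 E p" "hd p = x" "last p = y"
  shows "gpath X0 E x y = p"
proof -
  have "x \<in> X0" "y \<in> X0"
    using assms(2-4) unfolding is_path_iff_edge_list by (auto dest: hd_in_set last_in_set)
  then have "\<exists>!p. is_path X0 E p \<and> hd p = x \<and> last p = y"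
    using assms(1) unfolding is_tree_def by blast
  then show ?thesis unfolding gpath_def by (rule the1_equality) (use assms(2-4) in simp)
qed

lemma tree_path_unique:
  assumes "is_tree X0 E" "is_path X0 E p" "is_path X0 E p'" "hd p = hd p'" "last p = last p'"
  shows "p = p'"
  using gpath_eq[OF assms(1,2)] gpath_eq[OF assms(1,3)] assms(4,5) by metis

lemma tree_subpath_unique:
  assumes tr: "is_tree X0 E" and p: "is_path X0 E p" and ij: "i \<le> j" "j < length p"
    and r: "is_path X0 E r" "hd r = p ! i" "last r = p ! j"
  shows "r = drop i (take (Suc j) p)"
proof (rule tree_path_unique[OF tr r(1)])
  show "is_path X0 E (drop i (take (Suc j) p))" using p ij by (intro is_path_drop is_path_take) auto
qed (use r ij in \<open>simp_all add: hd_drop_conv_nth last_conv_nth\<close>)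

lemma tree_path_distinct:
  assumes tr: "is_tree X0 E" and p: "is_path X0 E p"
  shows "distinct p"
proof (rule ccontr)
  assume "\<not> distinct p"
  then obtain i j where ij: "i < j" "j < length p" "p ! i = p ! j"
    by (metis distinct_conv_nth linorder_neqE_nat)
  have "p ! i \<in> X0" using p ij unfolding is_path_iff_edge_list by (auto dest: nth_mem)
  then have single: "is_path X0 E [p ! i]" by (rule is_path_singleton)
  have "[p ! i] = drop i (take (Suc j) p)"
    by (rule tree_subpath_unique[OF tr p _ _ single]) (use ij in simp_all)
  then have "length (drop i (take (Suc j) p)) = 1" by (simp flip: \<open>[p ! i] = _\<close>)
  then show False using ij by simp
qed

lemma tree_edge_in_path:
  assumes tr: "is_tree X0 E" and p: "is_path X0 E p" and e: "{a, b} \<in> E"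
    and a: "a \<in> set p" and b: "b \<in> set p"
  shows "{a, b} \<in> set (edge_list p)"
proof -
  have ordered: "{p ! i, p ! j} \<in> set (edge_list p)"
    if e': "{p ! i, p ! j} \<in> E" and ij: "i < j" "j < length p" for i j
  proof -
    have "p ! i \<noteq> p ! j" using tree_edge_ends_distinct[OF tr e'] .
    moreover have "p ! i \<in> X0" "p ! j \<in> X0" using p ij unfolding is_path_iff_edge_list by auto
    ultimately have edge: "is_path X0 E [p ! i, p ! j]"
      using e' unfolding is_path_iff_edge_list by auto
    have "[p ! i, p ! j] = drop i (take (Suc j) p)"
      by (rule tree_subpath_unique[OF tr p _ _ edge]) (use ij in simp_all)
    then have "length (drop i (take (Suc j) p)) = 2" by (simp flip: \<open>[p ! i, p ! j] = _\<close>)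
    then have "j = Suc i" using ij by simp
    then show ?thesis
      using ij nth_mem[of i "edge_list p"] by (simp add: nth_edge_list length_edge_list)
  qed
  obtain i j where ij: "i < length p" "j < length p" "p ! i = a" "p ! j = b"
    using a b by (auto simp: in_set_conv_nth)
  have "i \<noteq> j" using ij tree_edge_ends_distinct[OF tr e] by auto
  then consider "i < j" | "j < i" by linarith
  then show ?thesis
    using ordered[of i j] ordered[of j i] e ij by cases (simp_all add: insert_commute)
qed

lemma gpath_prefix:
  assumes tr: "is_tree X0 E" and p: "is_path X0 E p" and j: "j < length p"
  shows "gpath X0 E (hd p) (p ! j) = take (Suc j) p"
  by (rule gpath_eq[OF tr is_path_take[OF p]]) (use p j in \<open>auto simp: last_take_Suc is_path_def\<close>)

lemma tree_paths_meet:
  assumes tr: "is_tree X0 E" and p1: "is_path X0 E p1" and p2: "is_path X0 E p2"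
    and hd: "hd p1 = hd p2" and i: "i < length p1" and j: "j < length p2" and eq: "p1 ! i = p2 ! j"
  shows "i = j \<and> take (Suc i) p1 = take (Suc i) p2"
proof -
  have "take (Suc i) p1 = take (Suc j) p2"
    using gpath_prefix[OF tr p1 i] gpath_prefix[OF tr p2 j] hd eq by simp
  moreover from this have "Suc i = Suc j" using i j by (metis length_take min.absorb2 Suc_leI)
  ultimately show ?thesis by simp
qed

definition branch_at :: "nat \<Rightarrow> 'a list \<Rightarrow> 'a list \<Rightarrow> bool" where
  "branch_at k p1 p2 \<longleftrightarrow> k < length p1 \<and> k < length p2 \<and> p1 ! k = p2 ! k \<and>
     set (drop (Suc k) p1) \<inter> set (drop k p2) = {} \<and> set (drop (Suc k) p2) \<inter> set (drop k p1) = {}"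

definition join_at :: "nat \<Rightarrow> 'a list \<Rightarrow> 'a list \<Rightarrow> 'a list" where
  "join_at k p1 p2 = rev (drop k p1) @ tl (drop k p2)"

lemma branch_at_sym: "branch_at k p1 p2 \<Longrightarrow> branch_at k p2 p1"
  unfolding branch_at_def by auto

lemma tree_paths_branch_point:
  assumes tr: "is_tree X0 E" and p1: "is_path X0 E p1" and p2: "is_path X0 E p2"
    and hd: "hd p1 = hd p2"
  obtains k where "branch_at k p1 p2" "take (Suc k) p1 = take (Suc k) p2"
proof -
  define K where "K = {i. i < length p1 \<and> i < length p2 \<and> p1 ! i = p2 ! i}"
  have fin: "finite K" unfolding K_def by (rule finite_subset[of _ "{..<length p1}"]) auto
  have "0 \<in> K" using p1 p2 hd by (auto simp: K_def is_path_def hd_conv_nth)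
  then have k: "Max K \<in> K" using fin by (intro Max_in) auto
  have K_sym: "K = {i. i < length p2 \<and> i < length p1 \<and> p2 ! i = p1 ! i}"
    unfolding K_def by auto
  have beyond: "set (drop (Suc (Max K)) r1) \<inter> set r2 = {}"
    if r: "is_path X0 E r1" "is_path X0 E r2" "hd r1 = hd r2"
      and K: "K = {i. i < length r1 \<and> i < length r2 \<and> r1 ! i = r2 ! i}" for r1 r2
  proof (rule ccontr)
    assume "set (drop (Suc (Max K)) r1) \<inter> set r2 \<noteq> {}"
    then obtain t j where t: "t < length (drop (Suc (Max K)) r1)" "j < length r2"
      "drop (Suc (Max K)) r1 ! t = r2 ! j"
      unfolding in_set_conv_nth by (metis disjoint_iff in_set_conv_nth)
    define i where "i = Suc (Max K) + t"
    have i: "i < length r1" "r1 ! i = r2 ! j" using t by (auto simp: i_def)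
    then have "i \<in> K" using tree_paths_meet[OF tr r i(1) t(2)] K t(2) by simp
    then show False using Max_ge[OF fin, of i] by (simp add: i_def)
  qed
  show ?thesis
  proof (rule that)
    show "take (Suc (Max K)) p1 = take (Suc (Max K)) p2"
      using tree_paths_meet[OF tr p1 p2 hd, of "Max K" "Max K"] k unfolding K_def by blast
    have "set (drop (Suc (Max K)) p1) \<inter> set p2 = {}" "set (drop (Suc (Max K)) p2) \<inter> set p1 = {}"
      by (rule beyond[OF p1 p2 hd K_def], rule beyond[OF p2 p1 hd[symmetric] K_sym])
    then show "branch_at (Max K) p1 p2"
      using k set_drop_subset[of "Max K" p1] set_drop_subset[of "Max K" p2]
      unfolding branch_at_def K_def by blast
  qed
qed

lemma set_join_at:
  "branch_at k p1 p2 \<Longrightarrow>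
    set (join_at k p1 p2) = insert (p1 ! k) (set (drop (Suc k) p1) \<union> set (drop (Suc k) p2))"
  unfolding branch_at_def join_at_def
  using set_drop_conv_insert_nth[of k p1] by (simp add: drop_Suc tl_drop)

lemma set_edge_list_join_at:
  "branch_at k p1 p2 \<Longrightarrow>
    set (edge_list (join_at k p1 p2)) = set (edge_list (drop k p1)) \<union> set (edge_list (drop k p2))"
  unfolding branch_at_def join_at_def
  using edge_list_append_tl[of "rev (drop k p1)" "drop k p2"]
  by (simp add: edge_list_rev last_rev hd_drop_conv_nth)

lemma edge_lists_disjoint_at_branch:
  assumes tr: "is_tree X0 E" and p1: "is_path X0 E p1" and b: "branch_at k p1 p2"
  shows "set (edge_list (drop k p1)) \<inter> set (edge_list (drop k p2)) = {}"
proof (rule ccontr)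
  assume "set (edge_list (drop k p1)) \<inter> set (edge_list (drop k p2)) \<noteq> {}"
  then obtain e where e: "e \<in> set (edge_list (drop k p1))" "e \<in> set (edge_list (drop k p2))"
    by blast
  have "set (drop k p1) \<inter> set (drop k p2) \<subseteq> {p1 ! k}"
    using b set_drop_conv_insert_nth[of k p1] set_drop_conv_insert_nth[of k p2]
    unfolding branch_at_def by auto
  then have "e \<subseteq> {p1 ! k}" using e edge_list_subset by blast
  moreover have "e \<in> E"
    using e(1) is_path_drop[OF p1, of k] b by (auto simp: is_path_iff_edge_list branch_at_def)
  ultimately show False using tree_edge_card[OF tr] card_mono[of "{p1 ! k}" e] by simp
qed

lemma gpath_eq_join_at:
  assumes tr: "is_tree X0 E" and p1: "is_path X0 E p1" and p2: "is_path X0 E p2"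
    and b: "branch_at k p1 p2"
  shows "gpath X0 E (last p1) (last p2) = join_at k p1 p2"
  unfolding join_at_def
proof (rule gpath_eq[OF tr])
  have k: "k < length p1" "k < length p2" "p1 ! k = p2 ! k" using b by (auto simp: branch_at_def)
  show "is_path X0 E (rev (drop k p1) @ tl (drop k p2))"
    using is_path_drop[OF p1 k(1)] is_path_drop[OF p2 k(2)] k
      edge_lists_disjoint_at_branch[OF tr p1 b]
    by (intro is_path_append_tl is_path_rev) (auto simp: edge_list_rev last_rev hd_drop_conv_nth)
  show "hd (rev (drop k p1) @ tl (drop k p2)) = last p1" using k by (simp add: hd_rev)
  show "last (rev (drop k p1) @ tl (drop k p2)) = last p2"
  proof (cases "Suc k < length p2")
    case True
    then show ?thesis by (simp add: drop_Suc[symmetric] tl_drop last_drop)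
  next
    case False
    then have "tl (drop k p2) = []" by (simp add: drop_Suc[symmetric] tl_drop)
    moreover have "k = length p2 - 1" using k(2) False by simp
    moreover have "p2 \<noteq> []" using k(2) by auto
    ultimately show ?thesis using k by (simp add: last_rev hd_drop_conv_nth last_conv_nth)
  qed
qed

section \<open>Products of decorations along paths\<close>

definition outer_prod :: "'a set set \<Rightarrow> ('a set \<Rightarrow> 'a \<Rightarrow> int) \<Rightarrow> 'a \<Rightarrow> 'a set set \<Rightarrow> int" where
  "outer_prod E q y X = (\<Prod>\<epsilon>\<in>{\<epsilon>\<in>E. y \<in> \<epsilon> \<and> \<epsilon> \<notin> X}. q \<epsilon> y)"

lemma Qd_eq_outer_prod: "Qd E q e x = outer_prod E q x {e}"
  unfolding Qd_def outer_prod_def by (rule prod.cong) auto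

lemma outer_prod_cong:
  assumes "\<And>\<epsilon>. \<epsilon> \<in> E \<Longrightarrow> y \<in> \<epsilon> \<Longrightarrow> \<epsilon> \<in> X \<longleftrightarrow> \<epsilon> \<in> Y"
  shows "outer_prod E q y X = outer_prod E q y Y"
proof -
  have "{\<epsilon>\<in>E. y \<in> \<epsilon> \<and> \<epsilon> \<notin> X} = {\<epsilon>\<in>E. y \<in> \<epsilon> \<and> \<epsilon> \<notin> Y}" using assms by blast
  then show ?thesis unfolding outer_prod_def by simp
qed

lemma outer_prod_Un_Int:
  assumes "finite E"
  shows "outer_prod E q y (X \<union> Y) * outer_prod E q y (X \<inter> Y)
    = outer_prod E q y X * outer_prod E q y Y"
proof -
  have "{\<epsilon>\<in>E. y \<in> \<epsilon> \<and> \<epsilon> \<notin> X \<union> Y} = {\<epsilon>\<in>E. y \<in> \<epsilon> \<and> \<epsilon> \<notin> X} \<inter> {\<epsilon>\<in>E. y \<in> \<epsilon> \<and> \<epsilon> \<notin> Y}"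
    "{\<epsilon>\<in>E. y \<in> \<epsilon> \<and> \<epsilon> \<notin> X \<inter> Y} = {\<epsilon>\<in>E. y \<in> \<epsilon> \<and> \<epsilon> \<notin> X} \<union> {\<epsilon>\<in>E. y \<in> \<epsilon> \<and> \<epsilon> \<notin> Y}"
    by blast+
  then show ?thesis unfolding outer_prod_def
    by (simp only: mult.commute[of "prod _ (_ \<inter> _)"]) (rule prod.union_inter, use assms in auto)
qed

lemma outer_prod_insert:
  assumes "finite E" "e \<in> E" "y \<in> e" "e \<notin> X"
  shows "outer_prod E q y X = q e y * outer_prod E q y (insert e X)"
proof -
  have "{\<epsilon>\<in>E. y \<in> \<epsilon> \<and> \<epsilon> \<notin> X} = insert e {\<epsilon>\<in>E. y \<in> \<epsilon> \<and> \<epsilon> \<notin> insert e X}" using assms by blast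
  then show ?thesis unfolding outer_prod_def using assms(1) by simp
qed

lemma outer_prod_eq_1:
  "(\<And>\<epsilon>. \<epsilon> \<in> E \<Longrightarrow> y \<in> \<epsilon> \<Longrightarrow> q \<epsilon> y = 1) \<Longrightarrow> outer_prod E q y X = 1"
  unfolding outer_prod_def by (intro prod.neutral) auto

lemma outer_prod_take:
  assumes "distinct p" "k < length p" "y \<in> set (take k p)"
  shows "outer_prod E q y (set (edge_list p)) = outer_prod E q y (set (edge_list (take (Suc k) p)))"
proof (rule outer_prod_cong)
  have "y \<notin> set (drop k p)" using assms set_take_disj_set_drop_if_distinct[of p k k] by auto
  then show "\<epsilon> \<in> set (edge_list p) \<longleftrightarrow> \<epsilon> \<in> set (edge_list (take (Suc k) p))" if "y \<in> \<epsilon>" for \<epsilon>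
    using set_edge_list_take_drop[OF assms(2)] edge_list_subset that by blast
qed

lemma outer_prod_drop:
  assumes "distinct p" "k < length p" "y \<in> set (drop (Suc k) p)"
  shows "outer_prod E q y (set (edge_list p)) = outer_prod E q y (set (edge_list (drop k p)))"
proof (rule outer_prod_cong)
  have "y \<notin> set (take (Suc k) p)"
    using assms set_take_disj_set_drop_if_distinct[of p "Suc k" "Suc k"] by auto
  then show "\<epsilon> \<in> set (edge_list p) \<longleftrightarrow> \<epsilon> \<in> set (edge_list (drop k p))" if "y \<in> \<epsilon>" for \<epsilon>
    using set_edge_list_take_drop[OF assms(2)] edge_list_subset that by blast
qed

definition path_weight :: "'a set set \<Rightarrow> ('a set \<Rightarrow> 'a \<Rightarrow> int) \<Rightarrow> 'a list \<Rightarrow> int" where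
  "path_weight E q p = (\<Prod>y\<in>set p. outer_prod E q y (set (edge_list p)))"

definition tail_prod :: "'a set set \<Rightarrow> ('a set \<Rightarrow> 'a \<Rightarrow> int) \<Rightarrow> nat \<Rightarrow> 'a list \<Rightarrow> int" where
  "tail_prod E q k p = (\<Prod>y\<in>set (drop (Suc k) p). outer_prod E q y (set (edge_list p)))"

lemma prod_incident_edges_eq_path_weight:
  assumes tr: "is_tree X0 E" and p: "is_path X0 E p"
  shows "(\<Prod>\<epsilon>\<in>incident_edges E p. q_path q \<epsilon> p) = path_weight E q p"
proof -
  define I where "I y = {\<epsilon>\<in>E. y \<in> \<epsilon> \<and> \<epsilon> \<notin> set (edge_list p)}" for y
  have unique: "y1 = y2" if "y1 \<in> set p" "y2 \<in> set p" "\<epsilon> \<in> I y1" "\<epsilon> \<in> I y2" for y1 y2 \<epsilon>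
  proof (rule ccontr)
    assume ne: "y1 \<noteq> y2"
    have e: "\<epsilon> \<in> E" "y1 \<in> \<epsilon>" "y2 \<in> \<epsilon>" "\<epsilon> \<notin> set (edge_list p)" using that(3,4) by (auto simp: I_def)
    then have "\<epsilon> = {y1, y2}" using tree_edge_eq[OF tr e(1-3) ne] by simp
    then show False using tree_edge_in_path[OF tr p _ that(1,2)] e by simp
  qed
  have "incident_edges E p = (\<Union>y\<in>set p. I y)"
    unfolding incident_edges_def I_def path_edges_eq_set_edge_list by blast
  then have "(\<Prod>\<epsilon>\<in>incident_edges E p. q_path q \<epsilon> p) = (\<Prod>y\<in>set p. \<Prod>\<epsilon>\<in>I y. q_path q \<epsilon> p)"
    by (simp only:)
      (rule prod.UNION_disjoint, use tree_finite_edges[OF tr] unique in \<open>auto simp: I_def\<close>)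
  also have "\<dots> = (\<Prod>y\<in>set p. \<Prod>\<epsilon>\<in>I y. q \<epsilon> y)"
  proof (rule prod.cong[OF refl], rule prod.cong[OF refl])
    fix y \<epsilon> assume y: "y \<in> set p" and e: "\<epsilon> \<in> I y"
    have "(THE u. u \<in> set p \<and> u \<in> \<epsilon>) = y"
    proof (rule the_equality)
      show "y \<in> set p \<and> y \<in> \<epsilon>" using y e by (simp add: I_def)
      show "u = y" if "u \<in> set p \<and> u \<in> \<epsilon>" for u
        using unique[OF _ y _ e] that e by (auto simp: I_def)
    qed
    then show "q_path q \<epsilon> p = q \<epsilon> y" by (simp add: q_path_def)
  qed
  finally show ?thesis by (simp add: path_weight_def outer_prod_def I_def)
qed

lemma xva_eq_path_weight:
  assumes tr: "is_tree (V \<union> A) E" and "x \<in> V \<union> A" "\<beta> \<in> V \<union> A"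
  shows "xva V A E f q x \<beta> = f \<beta> * path_weight E q (gpath (V \<union> A) E x \<beta>)"
  using prod_incident_edges_eq_path_weight[OF tr] gpath_is_path[OF tr assms(2,3)]
  by (simp add: xva_def)

lemma phi_path_eq_tail_prod:
  assumes "finite E"
  shows "phi_path E q p = tail_prod E q 0 p"
proof -
  have "{(u, e). u \<in> set (tl p) \<and> e \<in> E \<and> u \<in> e \<and> e \<notin> path_edges p}
      = (SIGMA u:set (tl p). {e\<in>E. u \<in> e \<and> e \<notin> set (edge_list p)})"
    by (auto simp: path_edges_eq_set_edge_list)
  then have "phi_path E q p
      = (\<Prod>(u, e)\<in>(SIGMA u:set (tl p). {e\<in>E. u \<in> e \<and> e \<notin> set (edge_list p)}). q e u)"
    unfolding phi_path_def by simp
  also have "\<dots> = (\<Prod>u\<in>set (tl p). outer_prod E q u (set (edge_list p)))"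
    unfolding outer_prod_def by (rule prod.Sigma[symmetric]) (use assms in auto)
  finally show ?thesis by (simp add: tail_prod_def drop_Suc)
qed

lemma path_weight_eq_phi_path:
  assumes "finite E" "distinct p" "p \<noteq> []"
  shows "path_weight E q p = outer_prod E q (hd p) (set (edge_list p)) * phi_path E q p"
proof -
  have "set p = insert (hd p) (set (tl p))" "hd p \<notin> set (tl p)"
    using assms(2,3) by (cases p; simp)+
  then show ?thesis
    unfolding phi_path_eq_tail_prod[OF assms(1)] path_weight_def tail_prod_def
    by (simp add: drop_Suc)
qed

lemma prod_set_append_Cons:
  assumes "distinct (a @ m # b)"
  shows "(\<Prod>y\<in>set (a @ m # b). g y) = (\<Prod>y\<in>set a. g y) * g m * (\<Prod>y\<in>set b. g y)"
proof -
  have "set (a @ m # b) = set a \<union> insert m (set b)" by simp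
  moreover have "set a \<inter> insert m (set b) = {}" "m \<notin> set b" using assms by auto
  ultimately show ?thesis by (simp add: prod.union_disjoint mult_ac)
qed

lemma path_weight_join_at:
  assumes p: "distinct p1" "distinct p2" and b: "branch_at k p1 p2"
  shows "path_weight E q (join_at k p1 p2)
    = outer_prod E q (p1 ! k) (set (edge_list (drop k p1)) \<union> set (edge_list (drop k p2)))
      * tail_prod E q k p1 * tail_prod E q k p2"
proof -
  define D where "D = set (edge_list (drop k p1)) \<union> set (edge_list (drop k p2))"
  have tail: "outer_prod E q y D = outer_prod E q y (set (edge_list r1))"
    if r: "distinct r1" "branch_at k r1 r2"
      and D: "D = set (edge_list (drop k r1)) \<union> set (edge_list (drop k r2))"
      and y: "y \<in> set (drop (Suc k) r1)" for r1 r2 y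
  proof -
    have k: "k < length r1" and "y \<notin> set (drop k r2)" using r(2) y unfolding branch_at_def by blast+
    then have "outer_prod E q y D = outer_prod E q y (set (edge_list (drop k r1)))"
      unfolding D using edge_list_subset by (intro outer_prod_cong) blast
    then show ?thesis using outer_prod_drop[OF r(1) k y] by simp
  qed
  have not_tail: "r ! k \<notin> set (drop (Suc k) r)" if r: "distinct r" "k < length r" for r
  proof -
    have "r ! k \<in> set (take (Suc k) r)" using r by (simp add: take_Suc_conv_app_nth)
    then show ?thesis using set_take_disj_set_drop_if_distinct[OF r(1), of "Suc k" "Suc k"] by blast
  qed
  have k: "k < length p1" "k < length p2" "p1 ! k = p2 ! k"
    and disj: "set (drop (Suc k) p1) \<inter> set (drop (Suc k) p2) = {}"
    using b set_drop_subset_set_drop[of k "Suc k" p2] unfolding branch_at_def by auto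
  have "path_weight E q (join_at k p1 p2)
      = outer_prod E q (p1 ! k) D * (\<Prod>y\<in>set (drop (Suc k) p1). outer_prod E q y D)
        * (\<Prod>y\<in>set (drop (Suc k) p2). outer_prod E q y D)"
    unfolding path_weight_def set_edge_list_join_at[OF b] D_def[symmetric] set_join_at[OF b]
    using not_tail[OF p(1) k(1)] not_tail[OF p(2) k(2)] k(3) disj
    by (simp add: prod.union_disjoint mult.assoc)
  also have "\<dots> = outer_prod E q (p1 ! k) D * tail_prod E q k p1 * tail_prod E q k p2"
    using tail[OF p(1) b] tail[OF p(2) branch_at_sym[OF b]] unfolding tail_prod_def D_def
    by (simp add: Un_commute)
  finally show ?thesis unfolding D_def .
qed

lemma phi_path_split:
  assumes "finite E" "distinct p" "0 < k" "k < length p"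
  shows "phi_path E q p
    = (\<Prod>y\<in>set (tl (take k p)). outer_prod E q y (set (edge_list (take (Suc k) p))))
      * outer_prod E q (p ! k) (set (edge_list p)) * tail_prod E q k p"
proof -
  have "take k p \<noteq> []" using assms(3,4) by (cases p) auto
  have "tl p = tl (take k p @ p ! k # drop (Suc k) p)"
    using arg_cong[OF id_take_nth_drop[OF assms(4)], of tl] .
  then have split: "tl p = tl (take k p) @ p ! k # drop (Suc k) p"
    using tl_append2[OF \<open>take k p \<noteq> []\<close>] by simp
  have "distinct (tl p)" using assms(2) by (simp add: distinct_tl)
  then have "(\<Prod>y\<in>set (tl p). outer_prod E q y (set (edge_list p)))
      = (\<Prod>y\<in>set (tl (take k p)). outer_prod E q y (set (edge_list p)))
        * outer_prod E q (p ! k) (set (edge_list p)) * tail_prod E q k p"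
    unfolding tail_prod_def split by (rule prod_set_append_Cons)
  then have "phi_path E q p = (\<Prod>y\<in>set (tl (take k p)). outer_prod E q y (set (edge_list p)))
      * outer_prod E q (p ! k) (set (edge_list p)) * tail_prod E q k p"
    unfolding phi_path_eq_tail_prod[OF assms(1)] tail_prod_def by (simp add: drop_Suc)
  moreover have "y \<in> set (take k p)" if "y \<in> set (tl (take k p))" for y
    using that by (simp add: list.set_sel(2)[OF \<open>take k p \<noteq> []\<close>])
  ultimately show ?thesis using outer_prod_take[OF assms(2,4)] by simp
qed

section \<open>The tree attached at a neighbour of the root\<close>

locale attached_tree =
  fixes V A :: "'a set" and E :: "'a set set" and f :: "'a \<Rightarrow> int"
    and q qs :: "'a set \<Rightarrow> 'a \<Rightarrow> int" and v0 u \<alpha> :: 'a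
  assumes T: "decorated_tree V A E f q"
    and root: "is_root V A E q v0"
    and nbr: "{v0, u} \<in> E"
    and fresh: "\<alpha> \<notin> V \<union> A"
    and Ti: "att_q V A E f q v0 u \<alpha> qs"
begin

abbreviation "G \<equiv> V \<union> A"
abbreviation "C \<equiv> comp_cells E v0 u"
abbreviation "E' \<equiv> att_E E v0 u \<alpha>"
abbreviation "V' \<equiv> att_V V E v0 u"
abbreviation "A' \<equiv> att_A A E v0 u \<alpha>"
abbreviation "f' \<equiv> att_f f \<alpha>"
abbreviation "q' \<equiv> att_q' q v0 u \<alpha>"
abbreviation "\<gamma> z \<equiv> gpath G E v0 z"
abbreviation "\<gamma>' z \<equiv> gpath (V' \<union> A') E' \<alpha> z"
abbreviation "R \<equiv> {(a, b). {a, b} \<in> E \<and> v0 \<notin> {a, b}}"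

lemma tree: "is_tree G E" using T by (simp add: decorated_tree_def)
lemma finite_E: "finite E" using tree_finite_edges[OF tree] .
lemma disjoint_V_A: "V \<inter> A = {}" using T by (simp add: decorated_tree_def)
lemma v0_in_V: "v0 \<in> V" using root by (simp add: is_root_def)
lemma v0_in_cells: "v0 \<in> G" using v0_in_V by blast
lemma q_at_root: "\<epsilon> \<in> E \<Longrightarrow> v0 \<in> \<epsilon> \<Longrightarrow> q \<epsilon> v0 = 1"
  using root by (simp add: is_root_def)
lemma edge_subset_cells: "\<epsilon> \<in> E \<Longrightarrow> \<epsilon> \<subseteq> G" using tree_edge_card[OF tree] by blast
lemma u_in_cells: "u \<in> G" using edge_subset_cells[OF nbr] by simp
lemma u_neq_v0: "u \<noteq> v0" using tree_edge_ends_distinct[OF tree nbr] by simp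
lemma valency_arrow: "\<beta> \<in> A \<Longrightarrow> valency E \<beta> = 1" using T by (simp add: decorated_tree_def)
lemma q_arrow: "\<epsilon> \<in> E \<Longrightarrow> \<beta> \<in> A \<Longrightarrow> \<beta> \<in> \<epsilon> \<Longrightarrow> q \<epsilon> \<beta> = 1"
  using T by (simp add: decorated_tree_def)

lemma component_conv_rtrancl: "C = {y. (u, y) \<in> R\<^sup>*}" by (simp add: comp_cells_def)

lemma gpath_props:
  assumes "x \<in> G" "y \<in> G"
  shows "is_path G E (gpath G E x y)" "hd (gpath G E x y) = x" "last (gpath G E x y) = y"
    "distinct (gpath G E x y)" "gpath G E x y \<noteq> []"
  using gpath_is_path[OF tree assms] tree_path_distinct[OF tree] by (auto simp: is_path_def)

lemmas root_path_props = gpath_props[OF v0_in_cells]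

lemma gpath_u_u: "gpath G E u u = [u]"
  by (rule gpath_eq[OF tree is_path_singleton[OF u_in_cells]]) auto

lemma rtrancl_component_cell: "(u, y) \<in> R\<^sup>* \<Longrightarrow> y \<in> G \<and> y \<noteq> v0"
proof (induction rule: rtrancl_induct)
  case base
  then show ?case using u_in_cells u_neq_v0 by simp
next
  case (step y z)
  then show ?case using edge_subset_cells[of "{y, z}"] by auto
qed

lemma component_cell: "y \<in> C \<Longrightarrow> y \<in> G \<and> y \<noteq> v0"
  using rtrancl_component_cell component_conv_rtrancl by blast

lemma u_in_component: "u \<in> C" unfolding component_conv_rtrancl by simp

lemma rtrancl_gpath_avoids_root: "(u, y) \<in> R\<^sup>* \<Longrightarrow> v0 \<notin> set (gpath G E u y)"
proof (induction rule: rtrancl_induct)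
  case base
  then show ?case using u_neq_v0 gpath_u_u by simp
next
  case (step y z)
  have yC: "y \<in> C" using step(1) component_conv_rtrancl by simp
  then have yG: "y \<in> G" using component_cell by blast
  have zG: "z \<in> G" using step(2) edge_subset_cells[of "{y, z}"] by auto
  let ?g = "gpath G E u y"
  have g: "is_path G E ?g" "hd ?g = u" "last ?g = y" using gpath_props[OF u_in_cells yG] by auto
  show ?case
  proof (cases "z \<in> set ?g")
    case True
    then obtain j where j: "j < length ?g" "?g ! j = z" by (auto simp: in_set_conv_nth)
    have "gpath G E u z = take (Suc j) ?g" using gpath_prefix[OF tree g(1) j(1)] g(2) j(2) by simp
    then show ?thesis using step(3) by (auto dest: in_set_takeD)
  next
    case False
    have "{last ?g, z} \<notin> set (edge_list ?g)" using False edge_list_subset by blast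
    then have "is_path G E (?g @ [z])" using is_path_snoc[OF g(1) zG] step(2) g(3) by auto
    moreover have "hd (?g @ [z]) = u" using g(1,2) by (cases ?g) (auto simp: is_path_def)
    ultimately have "gpath G E u z = ?g @ [z]"
      using gpath_eq[OF tree, of "?g @ [z]" u z] by simp
    then show ?thesis using step(2,3) by auto
  qed
qed

lemma gpath_avoids_root: "y \<in> C \<Longrightarrow> v0 \<notin> set (gpath G E u y)"
  using rtrancl_gpath_avoids_root component_conv_rtrancl by blast

lemma root_path_component: "y \<in> C \<Longrightarrow> \<gamma> y = v0 # gpath G E u y"
proof -
  assume yC: "y \<in> C"
  then have yG: "y \<in> G" using component_cell by blast
  let ?g = "gpath G E u y"
  have g: "is_path G E ?g" "hd ?g = u" "last ?g = y" "?g \<noteq> []"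
    using gpath_props[OF u_in_cells yG] by auto
  have "{v0, hd ?g} \<notin> set (edge_list ?g)" using gpath_avoids_root[OF yC] edge_list_subset by blast
  then have "is_path G E (v0 # ?g)" using is_path_Cons[OF g(1)] v0_in_V nbr g(2) by auto
  moreover have "hd (v0 # ?g) = v0" "last (v0 # ?g) = y" using g by auto
  ultimately show ?thesis using gpath_eq[OF tree, of "v0 # ?g" v0 y] by simp
qed

lemma path_in_component:
  assumes p: "is_path G E p" and h: "hd p \<in> C" and nv: "v0 \<notin> set p"
  shows "set p \<subseteq> C"
proof -
  have "\<forall>i < length p. p ! i \<in> C"
  proof (intro allI impI)
    fix i assume "i < length p"
    then show "p ! i \<in> C"
    proof (induction i)
      case 0
      then show ?case using h by (simp add: hd_conv_nth)
    next
      case (Suc i)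
      have e: "{p ! i, p ! Suc i} \<in> E" using is_path_edge[OF p Suc(2)] .
      have "v0 \<notin> {p ! i, p ! Suc i}" using nv Suc(2) by auto
      then have "(p ! i, p ! Suc i) \<in> R" using e by simp
      moreover have "(u, p ! i) \<in> R\<^sup>*" using Suc component_conv_rtrancl by simp
      ultimately show ?case using component_conv_rtrancl by (simp add: rtrancl_into_rtrancl)
    qed
  qed
  then show ?thesis by (auto simp: in_set_conv_nth)
qed

lemma component_if_second_cell:
  assumes zG: "z \<in> G" and nz: "z \<noteq> v0" and u1: "\<gamma> z ! 1 = u"
  shows "z \<in> C"
proof -
  have pz: "is_path G E (\<gamma> z)" "hd (\<gamma> z) = v0" "last (\<gamma> z) = z" "distinct (\<gamma> z)" "\<gamma> z \<noteq> []"
    using root_path_props[OF zG] by auto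
  have len: "2 \<le> length (\<gamma> z)" using length_ge_2_if_hd_neq_last[OF pz(5)] pz nz by simp
  have t: "is_path G E (tl (\<gamma> z))" using is_path_drop[OF pz(1), of 1] len by (simp add: drop_Suc)
  have "hd (tl (\<gamma> z)) = u"
  proof (cases "\<gamma> z")
    case (Cons a r)
    then have "r \<noteq> []" using len by auto
    then show ?thesis using Cons u1 by (simp add: hd_conv_nth)
  qed (use pz in simp)
  moreover have "v0 \<notin> set (tl (\<gamma> z))" using pz(4) pz(2) pz(5) by (cases "\<gamma> z") auto
  ultimately have "set (tl (\<gamma> z)) \<subseteq> C" using path_in_component[OF t] u_in_component by simp
  moreover have "z \<in> set (tl (\<gamma> z))"
  proof (cases "\<gamma> z")
    case (Cons a r)
    then have "r \<noteq> []" using len by auto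
    then show ?thesis using Cons pz(3) by (metis last_ConsR last_in_set list.sel(3))
  qed (use pz in simp)
  ultimately show ?thesis by blast
qed

lemma tl_root_path_component: "y \<in> C \<Longrightarrow> set (tl (\<gamma> y)) \<subseteq> C"
proof -
  assume yC: "y \<in> C"
  then have yG: "y \<in> G" using component_cell by blast
  have "is_path G E (gpath G E u y)" "hd (gpath G E u y) = u"
    using gpath_props[OF u_in_cells yG] by auto
  then show ?thesis
    using root_path_component[OF yC] path_in_component gpath_avoids_root[OF yC] u_in_component
    by simp
qed

lemma edges_at_component:
  assumes yC: "y \<in> C" and e: "\<epsilon> \<in> E" "y \<in> \<epsilon>"
  shows "(\<epsilon> = {v0, u} \<and> y = u) \<or> (v0 \<notin> \<epsilon> \<and> \<epsilon> \<subseteq> C)"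
proof -
  have yG: "y \<in> G" and yv: "y \<noteq> v0" using component_cell[OF yC] by auto
  have c2: "card \<epsilon> = 2" using tree_edge_card[OF tree e(1)] by simp
  then obtain z where z: "z \<in> \<epsilon>" "z \<noteq> y" using e(2) by (metis card_2_iff insert_iff)
  have eps: "\<epsilon> = {y, z}" using tree_edge_eq[OF tree e(1,2) z(1)] z(2) by simp
  show ?thesis
  proof (cases "z = v0")
    case True
    have "is_path G E [v0, y]" unfolding is_path_iff_edge_list
      using v0_in_V yG e eps True by (auto simp: insert_commute)
    then have "\<gamma> y = [v0, y]" using gpath_eq[OF tree, of "[v0, y]" v0 y] by simp
    then have "gpath G E u y = [y]" using root_path_component[OF yC] by simp
    then have "y = u" using gpath_props[OF u_in_cells yG] by (metis list.sel(1))
    then show ?thesis using eps True by (auto simp: insert_commute)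
  next
    case False
    then have "(y, z) \<in> R" using e eps yv by auto
    then have "z \<in> C" using yC component_conv_rtrancl by (simp add: rtrancl_into_rtrancl)
    then show ?thesis using eps yC False yv by auto
  qed
qed

definition parent :: "'a \<Rightarrow> 'a" where "parent y = last (butlast (\<gamma> y))"
definition parent_edge :: "'a \<Rightarrow> 'a set" where "parent_edge y = {parent y, y}"
definition parent_edge' :: "'a \<Rightarrow> 'a set" where
  "parent_edge' y = (if y = u then {\<alpha>, u} else parent_edge y)"

lemma E'_eq: "E' = {e\<in>E. v0 \<notin> e \<and> e \<subseteq> C} \<union> {{\<alpha>, u}}" by (simp add: att_E_def)
lemma component_subset_cells: "C \<subseteq> G" using component_cell by blast
lemma cells'_eq: "V' \<union> A' = C \<union> {\<alpha>}"
  using component_subset_cells by (auto simp: att_V_def att_A_def)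
lemma alpha_notin_component: "\<alpha> \<notin> C" using component_subset_cells fresh by blast
lemma v0_notin_component: "v0 \<notin> C" using component_cell by blast
lemma transform: "is_eta_transform V' A' E' f' q' \<alpha> qs" using Ti by (simp add: att_q_def)
lemma decorated': "decorated_tree V' A' E' f' qs"
  using transform by (simp add: is_eta_transform_def)
lemma tree': "is_tree (V' \<union> A') E'" using decorated' by (simp add: decorated_tree_def)
lemma finite_E': "finite E'" using tree_finite_edges[OF tree'] .

lemma path_in_T':
  assumes p: "is_path G E p" and s: "set p \<subseteq> C"
  shows "is_path (V' \<union> A') E' p"
proof -
  have "set (edge_list p) \<subseteq> E'"
  proof
    fix \<epsilon> assume e: "\<epsilon> \<in> set (edge_list p)"
    then have "\<epsilon> \<in> E" using p by (auto simp: is_path_iff_edge_list)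
    moreover have "\<epsilon> \<subseteq> C" using edge_list_subset[OF e] s by blast
    ultimately show "\<epsilon> \<in> E'" using v0_notin_component unfolding E'_eq by blast
  qed
  then show ?thesis using p s cells'_eq unfolding is_path_iff_edge_list by auto
qed

lemma gpath_from_u:
  assumes yC: "y \<in> C"
  shows "is_path G E (gpath G E u y)" "hd (gpath G E u y) = u" "last (gpath G E u y) = y"
    "set (gpath G E u y) \<subseteq> C" "gpath G E u y \<noteq> []"
proof -
  have yG: "y \<in> G" using component_cell[OF yC] by blast
  show "set (gpath G E u y) \<subseteq> C"
    using tl_root_path_component[OF yC] root_path_component[OF yC] by simp
  show "is_path G E (gpath G E u y)" "hd (gpath G E u y) = u" "last (gpath G E u y) = y"
    "gpath G E u y \<noteq> []"
    using gpath_props[OF u_in_cells yG] by simp_all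
qed

lemma root_path_u: "\<gamma> u = [v0, u]" using root_path_component[OF u_in_component] gpath_u_u by simp

lemma root_path'_component: "y \<in> C \<Longrightarrow> \<gamma>' y = \<alpha> # gpath G E u y"
proof -
  assume yC: "y \<in> C"
  let ?g = "gpath G E u y"
  have g: "is_path G E ?g" "hd ?g = u" "last ?g = y" "set ?g \<subseteq> C" "?g \<noteq> []"
    using gpath_from_u[OF yC] by auto
  have g': "is_path (V' \<union> A') E' ?g" using path_in_T'[OF g(1) g(4)] .
  have "{\<alpha>, hd ?g} \<notin> set (edge_list ?g)" using edge_list_subset g(4) alpha_notin_component by blast
  moreover have "{\<alpha>, hd ?g} \<in> E'" using g(2) E'_eq by simp
  ultimately have "is_path (V' \<union> A') E' (\<alpha> # ?g)" using is_path_Cons[OF g'] cells'_eq by auto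
  moreover have "hd (\<alpha> # ?g) = \<alpha>" "last (\<alpha> # ?g) = y" using g by auto
  ultimately show ?thesis using gpath_eq[OF tree', of "\<alpha> # ?g" \<alpha> y] by simp
qed

lemma root_path'_eq: "a \<in> C \<Longrightarrow> \<gamma>' a = \<alpha> # tl (\<gamma> a)"
  using root_path_component root_path'_component by simp

lemma root_path_second_cell: "a \<in> C \<Longrightarrow> \<gamma> a ! 1 = u"
  using root_path_component gpath_from_u by (metis One_nat_def hd_conv_nth nth_Cons_Suc)

lemma gpath_from_u_length: "y \<in> C \<Longrightarrow> y \<noteq> u \<Longrightarrow> 2 \<le> length (gpath G E u y)"
  using gpath_from_u length_ge_2_if_hd_neq_last by metis

lemma parent_edge_u: "parent_edge u = {v0, u}"
  using root_path_u by (simp add: parent_edge_def parent_def)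

lemma parent_edge_props:
  assumes yC: "y \<in> C"
  shows "parent_edge y \<in> set (edge_list (\<gamma> y)) \<and> parent_edge y \<in> E \<and> y \<in> parent_edge y"
proof -
  have yG: "y \<in> G" using component_cell[OF yC] by blast
  have pf: "is_path G E (\<gamma> y)" "last (\<gamma> y) = y" using root_path_props[OF yG] by auto
  have ne: "butlast (\<gamma> y) \<noteq> []"
    using root_path_component[OF yC] gpath_from_u[OF yC] by (cases "gpath G E u y") auto
  have "\<gamma> y = butlast (\<gamma> y) @ [y]" using pf root_path_props[OF yG] by (metis append_butlast_last_id)
  then have "edge_list (\<gamma> y) = edge_list (butlast (\<gamma> y)) @ [{last (butlast (\<gamma> y)), y}]"
    using edge_list_snoc[OF ne, of y] by simp
  then have "parent_edge y \<in> set (edge_list (\<gamma> y))" by (simp add: parent_edge_def parent_def)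
  then show ?thesis using pf by (auto simp: parent_edge_def parent_def is_path_iff_edge_list)
qed

lemma parent_edge_in_component:
  "y \<in> C \<Longrightarrow> y \<noteq> u \<Longrightarrow> v0 \<notin> parent_edge y \<and> parent_edge y \<subseteq> C"
  using edges_at_component parent_edge_props by blast

lemma parent_edge'_props: "y \<in> C \<Longrightarrow> parent_edge' y \<in> E' \<and> y \<in> parent_edge' y"
  using parent_edge_props parent_edge_in_component unfolding parent_edge'_def E'_eq by auto

lemma root_path'_edge_at_end:
  assumes yC: "y \<in> C" and e: "\<epsilon> \<in> set (edge_list (\<gamma>' y))" "y \<in> \<epsilon>"
  shows "\<epsilon> = parent_edge' y"
proof -
  let ?g = "gpath G E u y"
  have g: "is_path G E ?g" "hd ?g = u" "last ?g = y" "set ?g \<subseteq> C" "?g \<noteq> []"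
    using gpath_from_u[OF yC] by auto
  have "is_path (V' \<union> A') E' (\<gamma>' y)" using gpath_is_path[OF tree', of \<alpha> y] cells'_eq yC by auto
  then have d: "distinct (\<gamma>' y)" using tree_path_distinct[OF tree'] by blast
  have "last (\<gamma>' y) = y" using root_path'_component[OF yC] g by simp
  then have eq: "\<epsilon> = {last (butlast (\<gamma>' y)), y}" using edge_list_last_cell[OF d e(1)] e(2) by simp
  show ?thesis
  proof (cases "y = u")
    case True
    then show ?thesis using eq root_path'_component[OF yC] gpath_u_u by (simp add: parent_edge'_def)
  next
    case False
    have l: "2 \<le> length ?g" using gpath_from_u_length[OF yC False] .
    then have bn: "butlast ?g \<noteq> []" by (cases ?g) auto
    have "last (butlast (\<gamma>' y)) = last (butlast ?g)"
      using root_path'_component[OF yC] bn g(5) by simp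
    moreover have "last (butlast (\<gamma> y)) = last (butlast ?g)"
      using root_path_component[OF yC] bn g(5) by simp
    ultimately show ?thesis
      using eq False by (simp add: parent_edge'_def parent_edge_def parent_def)
  qed
qed

lemma q'_eq_q: "\<epsilon> \<noteq> {\<alpha>, u} \<Longrightarrow> q' \<epsilon> y = q \<epsilon> y" by (simp add: att_q'_def)
lemma q'_at_u: "q' {\<alpha>, u} u = q {v0, u} u"
proof -
  have "u \<noteq> \<alpha>" using fresh u_in_cells by blast
  then show ?thesis by (simp add: att_q'_def)
qed

lemma qs_eq_q_at_component:
  assumes yC: "y \<in> C" and e: "\<epsilon> \<in> E'" "y \<in> \<epsilon>" "\<epsilon> \<noteq> parent_edge' y"
  shows "qs \<epsilon> y = q \<epsilon> y"
proof -
  have ya: "y \<noteq> \<alpha>" using yC alpha_notin_component by blast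
  have na: "\<epsilon> \<noteq> {\<alpha>, u}"
  proof
    assume "\<epsilon> = {\<alpha>, u}"
    then have "y = u" using e(2) ya by auto
    then show False using e(3) \<open>\<epsilon> = {\<alpha>, u}\<close> by (simp add: parent_edge'_def)
  qed
  have yG: "y \<in> G" using component_cell[OF yC] by blast
  show ?thesis
  proof (cases "y \<in> V")
    case True
    then have "y \<in> V' - {\<alpha>}" using yC ya by (simp add: att_V_def)
    moreover have "\<epsilon> \<notin> path_edges (\<gamma>' y)"
      using root_path'_edge_at_end[OF yC _ e(2)] e(3) by (auto simp: path_edges_eq_set_edge_list)
    ultimately have "qs \<epsilon> y = q' \<epsilon> y" using transform e(1,2) unfolding is_eta_transform_def by blast
    then show ?thesis using q'_eq_q[OF na] by simp
  next
    case False
    then have yA: "y \<in> A" using yG by blast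
    then have "y \<in> A'" using yC by (simp add: att_A_def)
    then have "qs \<epsilon> y = 1" using decorated' e unfolding decorated_tree_def by blast
    moreover have "\<epsilon> \<in> E" using e(1) na E'_eq by auto
    ultimately show ?thesis using q_arrow[OF _ yA e(2)] by simp
  qed
qed

lemma outer_prod_T'_eq:
  assumes yC: "y \<in> C" and X: "\<forall>\<epsilon>\<in>X. v0 \<notin> \<epsilon> \<and> \<alpha> \<notin> \<epsilon>"
    and r: "\<And>\<epsilon>. \<epsilon> \<in> E' \<Longrightarrow> y \<in> \<epsilon> \<Longrightarrow> \<epsilon> \<noteq> parent_edge' y \<Longrightarrow> r \<epsilon> y = q \<epsilon> y"
  shows "outer_prod E' r y (insert (parent_edge' y) X)
    = outer_prod E q y (insert (parent_edge y) X)"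
proof -
  have ya: "y \<noteq> \<alpha>" using yC alpha_notin_component by blast
  have S: "{\<epsilon>\<in>E'. y \<in> \<epsilon> \<and> \<epsilon> \<notin> insert (parent_edge' y) X}
      = {\<epsilon>\<in>E. y \<in> \<epsilon> \<and> \<epsilon> \<notin> insert (parent_edge y) X}"
  proof (cases "y = u")
    case True
    have "parent_edge' y = {\<alpha>, u}" "parent_edge y = {v0, u}"
      using True parent_edge_u by (auto simp: parent_edge'_def)
    then show ?thesis using True edges_at_component[OF yC] alpha_notin_component v0_notin_component
      unfolding E'_eq by auto
  next
    case False
    then have "parent_edge' y = parent_edge y" by (simp add: parent_edge'_def)
    moreover have "y \<notin> {\<alpha>, u}" using False ya by simp
    ultimately show ?thesis using False edges_at_component[OF yC] unfolding E'_eq by auto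
  qed
  show ?thesis unfolding outer_prod_def S[symmetric]
    by (rule prod.cong[OF refl]) (use r in auto)
qed

lemma q'_eq_q_at_component:
  assumes yC: "y \<in> C" and e: "\<epsilon> \<in> E'" "y \<in> \<epsilon>" "\<epsilon> \<noteq> parent_edge' y"
  shows "q' \<epsilon> y = q \<epsilon> y"
proof (rule q'_eq_q, rule notI)
  assume "\<epsilon> = {\<alpha>, u}"
  then have "y = u" using e(2) yC alpha_notin_component by auto
  then show False using e(3) \<open>\<epsilon> = {\<alpha>, u}\<close> by (simp add: parent_edge'_def)
qed

lemma outer_prod_qs_eq:
  "y \<in> C \<Longrightarrow> \<forall>\<epsilon>\<in>X. v0 \<notin> \<epsilon> \<and> \<alpha> \<notin> \<epsilon> \<Longrightarrow>
    outer_prod E' qs y (insert (parent_edge' y) X) = outer_prod E q y (insert (parent_edge y) X)"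
  by (rule outer_prod_T'_eq) (simp_all add: qs_eq_q_at_component)

lemma outer_prod_q'_eq:
  "y \<in> C \<Longrightarrow> \<forall>\<epsilon>\<in>X. v0 \<notin> \<epsilon> \<and> \<alpha> \<notin> \<epsilon> \<Longrightarrow>
    outer_prod E' q' y (insert (parent_edge' y) X) = outer_prod E q y (insert (parent_edge y) X)"
  by (rule outer_prod_T'_eq) (simp_all add: q'_eq_q_at_component)

text \<open>phi(v0, y) without the factor at y itself.\<close>

definition inner_phi :: "'a \<Rightarrow> int" where
  "inner_phi y = (\<Prod>z\<in>set (tl (butlast (\<gamma> y))). outer_prod E q z (set (edge_list (\<gamma> y))))"

lemma parent_props:
  assumes yC: "y \<in> C" and yu: "y \<noteq> u"
  shows "parent y \<in> C" "parent y \<in> V" "\<gamma> (parent y) = butlast (\<gamma> y)" "\<gamma> y = \<gamma> (parent y) @ [y]"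
    "y \<notin> set (\<gamma> (parent y))" "2 \<le> length (\<gamma> (parent y))"
proof -
  let ?g = "gpath G E u y" and ?W = "\<gamma> y" and ?v = "parent y"
  have yG: "y \<in> G" using component_cell[OF yC] by blast
  have g: "is_path G E ?g" "hd ?g = u" "last ?g = y" "set ?g \<subseteq> C" "?g \<noteq> []"
    using gpath_from_u[OF yC] by auto
  have W: "?W = v0 # ?g" using root_path_component[OF yC] .
  have lg: "2 \<le> length ?g" using gpath_from_u_length[OF yC yu] .
  have bn: "butlast ?g \<noteq> []" using lg by (cases ?g) auto
  have Wf: "is_path G E ?W" "hd ?W = v0" "last ?W = y" "distinct ?W" "?W \<noteq> []"
    using root_path_props[OF yG] by auto
  have vg: "?v = last (butlast ?g)" using W bn g(5) by (simp add: parent_def)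
  have "?v \<in> set ?g" using vg bn by (metis in_set_butlastD last_in_set)
  then show vC: "?v \<in> C" using g(4) by blast
  have BW: "butlast ?W = v0 # butlast ?g" using W g(5) by simp
  have Wsplit: "?W = butlast ?W @ [y]" using Wf by (metis append_butlast_last_id)
  have lW: "1 < length ?W" using W lg g(5) by simp
  have "is_path G E (butlast ?W)" using is_path_take[OF Wf(1), of "length ?W - 1"] lW
    by (simp add: butlast_conv_take)
  moreover have "hd (butlast ?W) = v0" "last (butlast ?W) = ?v" using BW by (auto simp: parent_def)
  ultimately show Pv: "\<gamma> ?v = butlast ?W" using gpath_eq[OF tree, of "butlast ?W" v0 ?v] by simp
  show "\<gamma> y = \<gamma> ?v @ [y]" using Wsplit Pv by simp
  show "y \<notin> set (\<gamma> ?v)" using Wf(4) Wsplit Pv by (metis distinct_append not_distinct_conv_prefix)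
  show "2 \<le> length (\<gamma> ?v)" using Pv BW lg by simp
  have n: "3 \<le> length ?W" using W lg by simp
  have bW: "butlast ?W \<noteq> []" using BW by simp
  have "?v = butlast ?W ! (length (butlast ?W) - 1)"
    using bW by (simp add: parent_def last_conv_nth)
  also have "\<dots> = ?W ! (length ?W - 2)" using n by (simp add: nth_butlast numeral_2_eq_2)
  finally have "?v = ?W ! (length ?W - 2)" .
  then have "2 \<le> valency E ?v"
    using valency_interior_ge_2[OF Wf(1) finite_E, of "length ?W - 2"] n by simp
  moreover have "?v \<in> G" using vC component_subset_cells by blast
  ultimately show "?v \<in> V" using valency_arrow by fastforce
qed

lemma parent_edge_sum_u:
  assumes "u \<in> V"
  shows "q (parent_edge u) u + qs (parent_edge' u) u
    = (inner_phi u)^2 * outer_prod E q u {parent_edge u}"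
proof -
  have "u \<in> V'" "{\<alpha>, u} \<in> E'" using assms u_in_component by (simp_all add: att_V_def E'_eq)
  then have "qs {\<alpha>, u} u = Qd E' q' {\<alpha>, u} u - q' {\<alpha>, u} u"
    using transform unfolding is_eta_transform_def by blast
  moreover have "Qd E' q' {\<alpha>, u} u = outer_prod E q u {parent_edge u}"
    using outer_prod_q'_eq[OF u_in_component, of "{}"]
    by (simp add: Qd_eq_outer_prod parent_edge'_def)
  moreover have "inner_phi u = 1" by (simp add: inner_phi_def root_path_u)
  ultimately show ?thesis using q'_at_u parent_edge_u by (simp add: parent_edge'_def)
qed

lemma inner_phi_parent:
  assumes yC: "y \<in> C" and yu: "y \<noteq> u"
  defines "v \<equiv> parent y"
  shows "inner_phi y = outer_prod E q v {parent_edge v, parent_edge y} * inner_phi v"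
proof -
  note pf = parent_props[OF yC yu, folded v_def]
  have vG: "v \<in> G" using pf(1) component_subset_cells by blast
  have Pv: "is_path G E (\<gamma> v)" "distinct (\<gamma> v)" "last (\<gamma> v) = v" "\<gamma> v \<noteq> []"
    using root_path_props[OF vG] by auto
  have bPv: "butlast (\<gamma> v) \<noteq> []" using pf(6) by (cases "\<gamma> v") auto
  have Pv_split: "\<gamma> v = butlast (\<gamma> v) @ [v]" using Pv by (metis append_butlast_last_id)
  then have tlPv: "tl (\<gamma> v) = tl (butlast (\<gamma> v)) @ [v]" using bPv by (metis tl_append2)
  define S0 where "S0 = set (tl (butlast (\<gamma> v)))"
  have S0_sub: "S0 \<subseteq> set (butlast (\<gamma> v))" unfolding S0_def by (meson list.set_sel(2) bPv subsetI)
  have vS0: "v \<notin> S0"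
    using S0_sub Pv(2) Pv_split by (metis distinct_append not_distinct_conv_prefix subsetD)
  have set_tl: "set (tl (butlast (\<gamma> y))) = insert v S0" using pf(3) tlPv S0_def by simp
  have edges_y: "set (edge_list (\<gamma> y)) = insert (parent_edge y) (set (edge_list (\<gamma> v)))"
    using pf(4) edge_list_snoc[OF Pv(4), of y] Pv(3) by (simp add: parent_edge_def v_def)
  have at_S0: "outer_prod E q z (set (edge_list (\<gamma> y))) = outer_prod E q z (set (edge_list (\<gamma> v)))"
    if "z \<in> S0" for z
  proof -
    have "z \<noteq> v" "z \<noteq> y" using that vS0 S0_sub pf(5) in_set_butlastD by fastforce+
    then show ?thesis
      unfolding edges_y by (intro outer_prod_cong) (auto simp: parent_edge_def v_def)
  qed
  have at_v: "outer_prod E q v (set (edge_list (\<gamma> y)))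
      = outer_prod E q v {parent_edge v, parent_edge y}"
    unfolding edges_y
  proof (rule outer_prod_cong)
    fix \<epsilon> assume "\<epsilon> \<in> E" "v \<in> \<epsilon>"
    then show "\<epsilon> \<in> insert (parent_edge y) (set (edge_list (\<gamma> v)))
        \<longleftrightarrow> \<epsilon> \<in> {parent_edge v, parent_edge y}"
      using edge_list_last_cell[OF Pv(2), of \<epsilon>] Pv(3) parent_edge_props[OF pf(1)]
      by (auto simp: parent_edge_def parent_def)
  qed
  have "inner_phi y = outer_prod E q v (set (edge_list (\<gamma> y)))
      * (\<Prod>z\<in>S0. outer_prod E q z (set (edge_list (\<gamma> y))))"
    unfolding inner_phi_def set_tl using vS0 by (simp add: S0_def)
  also have "\<dots> = outer_prod E q v {parent_edge v, parent_edge y} * inner_phi v"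
    using at_S0 at_v by (simp add: inner_phi_def S0_def)
  finally show ?thesis .
qed

lemma Qd'_parent_edge_at_parent:
  assumes yC: "y \<in> C" and yu: "y \<noteq> u"
    and r: "\<And>\<epsilon>. \<epsilon> \<in> E' \<Longrightarrow> parent y \<in> \<epsilon> \<Longrightarrow> \<epsilon> \<noteq> parent_edge' (parent y) \<Longrightarrow>
      r \<epsilon> (parent y) = q \<epsilon> (parent y)"
  defines "v \<equiv> parent y"
  shows "Qd E' r (parent_edge y) v
    = r (parent_edge' v) v * outer_prod E q v {parent_edge v, parent_edge y}"
proof -
  note pf = parent_props[OF yC yu, folded v_def]
  have e: "v0 \<notin> parent_edge y" "parent_edge y \<subseteq> C" using parent_edge_in_component[OF yC yu] by auto
  then have "\<alpha> \<notin> parent_edge y" using alpha_notin_component by blast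
  moreover have "parent_edge v \<noteq> parent_edge y"
    using edge_list_subset parent_edge_props[OF pf(1)] pf(5) by (auto simp: parent_edge_def)
  ultimately have "parent_edge' v \<noteq> parent_edge y" by (auto simp: parent_edge'_def)
  then have "Qd E' r (parent_edge y) v
      = r (parent_edge' v) v * outer_prod E' r v (insert (parent_edge' v) {parent_edge y})"
    unfolding Qd_eq_outer_prod using parent_edge'_props[OF pf(1)]
    by (intro outer_prod_insert finite_E') auto
  also have "\<dots> = r (parent_edge' v) v * outer_prod E q v {parent_edge v, parent_edge y}"
    using outer_prod_T'_eq[OF pf(1), of "{parent_edge y}" r] r e \<open>\<alpha> \<notin> parent_edge y\<close>
    by (simp add: v_def)
  finally show ?thesis .
qed

text \<open>The determinant condition of T_i on the edge from y to its parent, with the Q-values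
  at the parent split into the decoration of the parent's own parent edge and the rest.\<close>

lemma parent_edge_det:
  assumes yC: "y \<in> C" and yV: "y \<in> V" and yu: "y \<noteq> u"
  defines "v \<equiv> parent y" and "e \<equiv> parent_edge y"
  shows "q e v * (q e y + qs e y)
    = outer_prod E q v {parent_edge v, e} * outer_prod E q y {e}
      * (q (parent_edge v) v + qs (parent_edge' v) v)"
proof -
  note pf = parent_props[OF yC yu, folded v_def]
  have e_in: "v0 \<notin> e" "e \<subseteq> C" "e \<in> E" "e = {v, y}"
    using parent_edge_in_component[OF yC yu] parent_edge_props[OF yC]
    by (auto simp: e_def v_def parent_edge_def)
  then have "e \<in> E'" "\<alpha> \<notin> e" using alpha_notin_component by (auto simp: E'_eq)
  have "parent_edge' y = e" using yu by (simp add: parent_edge'_def e_def)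
  have "parent_edge' v \<noteq> e"
    using edge_list_subset parent_edge_props[OF pf(1)] pf(5) \<open>\<alpha> \<notin> e\<close> e_in(4)
    by (auto simp: parent_edge'_def parent_edge_def)
  have parent_C: "parent y \<in> C" using pf(1) by (simp add: v_def)
  have "y \<in> V' - {\<alpha>}" "v \<in> V' - {\<alpha>}"
    using yV yC pf(1,2) alpha_notin_component by (auto simp: att_V_def)
  then have det: "detd E' qs v y = - detd E' q' v y"
    using transform \<open>e \<in> E'\<close> e_in(4) unfolding is_eta_transform_def by blast
  have "qs e v = q e v"
    using qs_eq_q_at_component[OF pf(1) \<open>e \<in> E'\<close>] \<open>parent_edge' v \<noteq> e\<close> e_in(4) by auto
  moreover have "q' e v = q e v" "q' e y = q e y" using \<open>\<alpha> \<notin> e\<close> by (auto simp: att_q'_def)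
  moreover have "Qd E' qs e y = outer_prod E q y {e}" "Qd E' q' e y = outer_prod E q y {e}"
    using outer_prod_qs_eq[OF yC, of "{}"] outer_prod_q'_eq[OF yC, of "{}"] \<open>parent_edge' y = e\<close>
    by (simp_all add: Qd_eq_outer_prod e_def)
  moreover have "Qd E' qs e v = qs (parent_edge' v) v * outer_prod E q v {parent_edge v, e}"
    using Qd'_parent_edge_at_parent[where r=qs, OF yC yu qs_eq_q_at_component[OF parent_C]]
    by (simp add: e_def v_def)
  moreover have "Qd E' q' e v = q (parent_edge v) v * outer_prod E q v {parent_edge v, e}"
  proof -
    have "q' (parent_edge' v) v = q (parent_edge v) v"
    proof (cases "v = u")
      case True
      then show ?thesis using q'_at_u parent_edge_u by (simp add: parent_edge'_def)
    next
      case False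
      then have "\<alpha> \<notin> parent_edge v"
        using parent_edge_in_component[OF pf(1)] alpha_notin_component by blast
      then show ?thesis using False q'_eq_q[of "parent_edge v"] by (auto simp: parent_edge'_def)
    qed
    then show ?thesis
      using Qd'_parent_edge_at_parent[where r=q', OF yC yu q'_eq_q_at_component[OF parent_C]]
      by (simp add: e_def v_def)
  qed
  ultimately show ?thesis
    using det unfolding detd_def e_in(4)[symmetric] by (simp add: algebra_simps)
qed

lemma parent_edge_sum:
  "y \<in> C \<Longrightarrow> y \<in> V \<Longrightarrow>
    q (parent_edge y) y + qs (parent_edge' y) y
      = (inner_phi y)^2 * outer_prod E q y {parent_edge y}"
proof (induction "length (\<gamma> y)" arbitrary: y rule: less_induct)
  case less
  show ?case
  proof (cases "y = u")
    case True
    then show ?thesis using parent_edge_sum_u less.prems(2) by simp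
  next
    case False
    define v e where "v = parent y" and "e = parent_edge y"
    define R r where "R = outer_prod E q v {parent_edge v, e}" and "r = outer_prod E q y {e}"
    note pf = parent_props[OF less.prems(1) False, folded v_def]
    have IH: "q (parent_edge v) v + qs (parent_edge' v) v
        = (inner_phi v)^2 * outer_prod E q v {parent_edge v}"
      using less.hyps[of v] pf(1,2,4) by simp
    have e: "e \<in> E" "v \<in> e" "e \<noteq> parent_edge v" "e \<notin> set (edge_list (\<gamma> v))"
      using parent_edge_props[OF less.prems(1)] parent_edge_props[OF pf(1)] edge_list_subset pf(5)
      by (auto simp: e_def v_def parent_edge_def)
    have "q e v \<ge> 1" \<comment> \<open>the root condition; it lets us cancel \<open>q e v\<close> below\<close>
      using root pf(1,2) e(1,2,4) v0_notin_component
      unfolding is_root_def path_edges_eq_set_edge_list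
      by (metis DiffI singletonD)
    have "outer_prod E q v {parent_edge v} = q e v * R"
      using outer_prod_insert[OF finite_E e(1,2), of "{parent_edge v}" q] e(3)
      by (simp add: R_def insert_commute)
    then have "q e v * (q e y + qs e y) = q e v * ((inner_phi v * R)^2 * r)"
      using parent_edge_det[OF less.prems False, folded v_def e_def] IH
      by (simp add: R_def r_def power2_eq_square algebra_simps)
    then have "q e y + qs e y = (inner_phi v * R)^2 * r" using \<open>q e v \<ge> 1\<close> by simp
    then show ?thesis
      using inner_phi_parent[OF less.prems(1) False] False
      by (simp add: R_def r_def e_def v_def parent_edge'_def mult.commute)
  qed
qed

lemma path_weight_root_path:
  assumes "b \<in> G"
  shows "path_weight E q (\<gamma> b) = phid V A E q v0 b"
proof -
  have "outer_prod E q v0 (set (edge_list (\<gamma> b))) = 1" using q_at_root by (intro outer_prod_eq_1)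
  then show ?thesis
    using root_path_props[OF assms] path_weight_eq_phi_path[OF finite_E] by (simp add: phid_def)
qed

lemma parent_edge_on_root_path:
  assumes aG: "a \<in> G" and yC: "y \<in> C" and y: "y \<in> set (\<gamma> a)"
  shows "parent_edge y \<in> set (edge_list (\<gamma> a))"
proof -
  obtain i where i: "i < length (\<gamma> a)" "\<gamma> a ! i = y" using y by (auto simp: in_set_conv_nth)
  then have "\<gamma> y = take (Suc i) (\<gamma> a)"
    using gpath_prefix[OF tree, of "\<gamma> a" i] root_path_props[OF aG] by simp
  then show ?thesis using parent_edge_props[OF yC] by (metis edge_list_take in_set_takeD)
qed

lemma tail_prod_qs_eq:
  assumes aC: "a \<in> C" and k: "0 < k"
  shows "tail_prod E' qs k (\<gamma>' a) = tail_prod E q k (\<gamma> a)"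
proof -
  let ?g = "gpath G E u a"
  have g: "hd ?g = u" "set ?g \<subseteq> C" "?g \<noteq> []" "distinct ?g"
    using gpath_from_u[OF aC] gpath_props(4)[OF u_in_cells] aC component_subset_cells by auto
  have paths: "\<gamma> a = v0 # ?g" "\<gamma>' a = \<alpha> # ?g"
    using root_path_component[OF aC] root_path'_component[OF aC] by auto
  have edges: "set (edge_list (\<gamma> a)) = insert {v0, u} (set (edge_list ?g))"
    "set (edge_list (\<gamma>' a)) = insert {\<alpha>, u} (set (edge_list ?g))"
    using g(1,3) by (simp_all add: paths edge_list_Cons)
  have X: "\<forall>\<epsilon>\<in>set (edge_list ?g). v0 \<notin> \<epsilon> \<and> \<alpha> \<notin> \<epsilon>"
    using edge_list_subset g(2) v0_notin_component alpha_notin_component by blast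
  show ?thesis unfolding tail_prod_def
  proof (rule prod.cong)
    show "set (drop (Suc k) (\<gamma>' a)) = set (drop (Suc k) (\<gamma> a))" by (simp add: paths)
    fix y assume "y \<in> set (drop (Suc k) (\<gamma> a))"
    then have "y \<in> set (drop k ?g)" by (simp add: paths)
    moreover have "set (drop k ?g) \<subseteq> set (tl ?g)"
      using k set_drop_subset_set_drop[of 1 k ?g] by (simp add: drop_Suc)
    moreover have "u \<notin> set (tl ?g)" using g(1,3,4) by (cases ?g) auto
    ultimately have yC: "y \<in> C" and yu: "y \<noteq> u" using g(2) list.set_sel(2)[OF g(3)] by auto
    then have y: "y \<notin> {v0, u}" "y \<notin> {\<alpha>, u}" using v0_notin_component alpha_notin_component by auto
    have "y \<in> set (\<gamma> a)" using \<open>y \<in> set (drop k ?g)\<close> by (simp add: paths in_set_dropD)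
    then have "parent_edge y \<in> insert {v0, u} (set (edge_list ?g))"
      using parent_edge_on_root_path[OF _ yC] aC component_subset_cells edges(1) by blast
    moreover have "parent_edge y \<noteq> {v0, u}" using parent_edge_props[OF yC] y(1) by blast
    ultimately have "parent_edge y \<in> set (edge_list ?g)" by blast
    then have "outer_prod E' qs y (set (edge_list (\<gamma>' a)))
        = outer_prod E' qs y (insert (parent_edge' y) (set (edge_list ?g)))"
      using yu y(2) unfolding edges(2) by (intro outer_prod_cong) (auto simp: parent_edge'_def)
    also have "\<dots> = outer_prod E q y (insert (parent_edge y) (set (edge_list ?g)))"
      by (rule outer_prod_qs_eq[OF yC X])
    also have "\<dots> = outer_prod E q y (set (edge_list (\<gamma> a)))"
      using y(1) \<open>parent_edge y \<in> set (edge_list ?g)\<close> unfolding edges(1)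
      by (intro outer_prod_cong) auto
    finally show "outer_prod E' qs y (set (edge_list (\<gamma>' a)))
        = outer_prod E q y (set (edge_list (\<gamma> a)))" .
  qed
qed

lemma phid_split:
  assumes aG: "a \<in> G" and k: "0 < k" "k < length (\<gamma> a)" and m: "\<gamma> a ! k = m" and mC: "m \<in> C"
  shows "phid V A E q v0 a = inner_phi m
    * outer_prod E q m (insert (parent_edge m) (set (edge_list (drop k (\<gamma> a)))))
    * tail_prod E q k (\<gamma> a)"
proof -
  have pa: "is_path G E (\<gamma> a)" "hd (\<gamma> a) = v0" "distinct (\<gamma> a)" using root_path_props[OF aG] by auto
  have Pm: "\<gamma> m = take (Suc k) (\<gamma> a)" using gpath_prefix[OF tree pa(1) k(2)] pa(2) m by simp
  have "butlast (\<gamma> m) = take k (\<gamma> a)" using k by (simp add: Pm butlast_take)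
  then have inner:
    "(\<Prod>y\<in>set (tl (take k (\<gamma> a))). outer_prod E q y (set (edge_list (take (Suc k) (\<gamma> a)))))
      = inner_phi m"
    by (simp add: inner_phi_def Pm)
  have "distinct (\<gamma> m)" "last (\<gamma> m) = m"
    using root_path_props mC component_subset_cells by auto
  then have at_m: "\<epsilon> \<in> set (edge_list (\<gamma> m)) \<longleftrightarrow> \<epsilon> = parent_edge m" if "m \<in> \<epsilon>" for \<epsilon>
    using edge_list_last_cell[of "\<gamma> m" \<epsilon>] parent_edge_props[OF mC] that
    by (auto simp: parent_edge_def parent_def)
  have "outer_prod E q m (set (edge_list (\<gamma> a)))
      = outer_prod E q m (insert (parent_edge m) (set (edge_list (drop k (\<gamma> a)))))"
    using at_m set_edge_list_take_drop[OF k(2)] by (intro outer_prod_cong) (auto simp: Pm)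
  then show ?thesis
    unfolding phid_def phi_path_split[OF finite_E pa(3) k] inner m by simp
qed

lemma root_paths_branch_point:
  assumes aC: "a \<in> C" and bG: "b \<in> G" and bv: "b \<noteq> v0"
  obtains k where "branch_at k (\<gamma> a) (\<gamma> b)" "0 < k \<longleftrightarrow> b \<in> C"
proof -
  have aG: "a \<in> G" using aC component_subset_cells by blast
  obtain k where b: "branch_at k (\<gamma> a) (\<gamma> b)" and take: "take (Suc k) (\<gamma> a) = take (Suc k) (\<gamma> b)"
    by (rule tree_paths_branch_point[OF tree root_path_props(1)[OF aG] root_path_props(1)[OF bG]])
      (simp add: root_path_props(2)[OF aG] root_path_props(2)[OF bG])
  have "0 < k \<longleftrightarrow> b \<in> C"
  proof
    assume "0 < k"
    then have "\<gamma> b ! 1 = u"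
      using arg_cong[OF take, of "\<lambda>p. p ! 1"] root_path_second_cell[OF aC] by simp
    then show "b \<in> C" using component_if_second_cell[OF bG bv] by simp
  next
    assume bC: "b \<in> C"
    have len: "1 < length (\<gamma> a)" "1 < length (\<gamma> b)"
      using gpath_from_u[OF aC] gpath_from_u[OF bC]
      by (simp_all add: root_path_component[OF aC] root_path_component[OF bC])
    have "u \<in> set (drop 1 (\<gamma> a))"
      using set_drop_conv_insert_nth[OF len(1)] root_path_second_cell[OF aC] by simp
    moreover have "u \<in> set (\<gamma> b)" using nth_mem[OF len(2)] root_path_second_cell[OF bC] by simp
    ultimately show "0 < k" using b by (auto simp: branch_at_def)
  qed
  with b show ?thesis by (rule that)
qed

lemma path_weight_leaving_component:
  assumes xC: "x \<in> C" and bG: "\<beta> \<in> G" and bC: "\<beta> \<notin> C" and bv: "\<beta> \<noteq> v0"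
  shows "path_weight E q (gpath G E x \<beta>) = phid V A E q v0 x * path_weight E q (\<gamma> \<beta>)"
proof -
  have xG: "x \<in> G" using xC component_subset_cells by blast
  obtain k where b: "branch_at k (\<gamma> x) (\<gamma> \<beta>)" and "k = 0"
    using root_paths_branch_point[OF xC bG bv] bC by blast
  have "outer_prod E q (\<gamma> x ! 0) X = 1" for X
    using q_at_root root_path_props(2,5)[OF xG] by (intro outer_prod_eq_1) (simp add: hd_conv_nth)
  then have "path_weight E q (join_at 0 (\<gamma> x) (\<gamma> \<beta>))
      = tail_prod E q 0 (\<gamma> x) * tail_prod E q 0 (\<gamma> \<beta>)"
    using path_weight_join_at[OF root_path_props(4)[OF xG] root_path_props(4)[OF bG] b] \<open>k = 0\<close>
    by simp
  moreover have "gpath G E x \<beta> = join_at 0 (\<gamma> x) (\<gamma> \<beta>)"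
    using gpath_eq_join_at[OF tree root_path_props(1)[OF xG] root_path_props(1)[OF bG] b] \<open>k = 0\<close>
      root_path_props(3)[OF xG] root_path_props(3)[OF bG] by simp
  ultimately show ?thesis
    using path_weight_root_path[OF bG] by (simp add: phid_def phi_path_eq_tail_prod[OF finite_E])
qed

lemma branch_cell_props:
  assumes xC: "x \<in> C" and bC: "\<beta> \<in> C" and bA: "\<beta> \<in> A" and xb: "x \<noteq> \<beta>"
    and k: "0 < k" "k < length (\<gamma> x)" "k < length (\<gamma> \<beta>)" and m: "\<gamma> x ! k = m" "\<gamma> \<beta> ! k = m"
  shows "Suc k < length (\<gamma> \<beta>)" "m \<in> V" "m \<in> C"
proof -
  have xG: "x \<in> G" and bG: "\<beta> \<in> G" using xC bC component_subset_cells by auto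
  have px: "is_path G E (\<gamma> x)" "last (\<gamma> x) = x" "\<gamma> x \<noteq> []" using root_path_props[OF xG] by auto
  have pb: "is_path G E (\<gamma> \<beta>)" "last (\<gamma> \<beta>) = \<beta>" "\<gamma> \<beta> \<noteq> []" using root_path_props[OF bG] by auto
  show long: "Suc k < length (\<gamma> \<beta>)"
  proof (rule ccontr)
    assume "\<not> Suc k < length (\<gamma> \<beta>)"
    then have "k = length (\<gamma> \<beta>) - 1" using k(3) by simp
    then have "m = \<beta>" using m(2) pb(2,3) by (simp add: last_conv_nth)
    show False
    proof (cases "Suc k < length (\<gamma> x)")
      case True
      then show False
        using valency_interior_ge_2[OF px(1) finite_E k(1)] valency_arrow[OF bA] m(1) \<open>m = \<beta>\<close>
        by simp
    next
      case False
      then have "k = length (\<gamma> x) - 1" using k(2) by simp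
      then have "m = x" using m(1) px(2,3) by (simp add: last_conv_nth)
      then show False using \<open>m = \<beta>\<close> xb by simp
    qed
  qed
  have "m \<in> set (drop 1 (\<gamma> \<beta>))"
    using k m(2) by (auto simp: in_set_conv_nth intro!: exI[of _ "k - 1"])
  then show "m \<in> C" using tl_root_path_component[OF bC] by (auto simp: drop_Suc)
  then have "m \<in> G" using component_subset_cells by blast
  moreover have "2 \<le> valency E m"
    using valency_interior_ge_2[OF pb(1) finite_E k(1) long] m(2) by simp
  ultimately show "m \<in> V" using valency_arrow by fastforce
qed

lemma parent_edge_notin_tail_edges:
  assumes aG: "a \<in> G" and k: "k < length (\<gamma> a)" and m: "\<gamma> a ! k = m" and mC: "m \<in> C"
  shows "parent_edge m \<notin> set (edge_list (drop k (\<gamma> a)))"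
proof -
  have pa: "is_path G E (\<gamma> a)" "hd (\<gamma> a) = v0" using root_path_props[OF aG] by auto
  have "\<gamma> m = take (Suc k) (\<gamma> a)" using gpath_prefix[OF tree pa(1) k] pa(2) m by simp
  then have "parent_edge m \<in> set (take k (edge_list (\<gamma> a)))"
    using parent_edge_props[OF mC] by (simp add: edge_list_take)
  moreover have "distinct (edge_list (\<gamma> a))" using pa(1) by (simp add: is_path_iff_edge_list)
  ultimately show ?thesis
    using set_take_disj_set_drop_if_distinct[of "edge_list (\<gamma> a)" k k]
    by (auto simp: edge_list_drop)
qed

lemma outer_prod_sum_at_component:
  assumes mC: "m \<in> C" and X: "\<forall>\<epsilon>\<in>X. v0 \<notin> \<epsilon> \<and> \<alpha> \<notin> \<epsilon>" and pm: "parent_edge m \<notin> X"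
  shows "outer_prod E q m X + outer_prod E' qs m X
    = (q (parent_edge m) m + qs (parent_edge' m) m) * outer_prod E q m (insert (parent_edge m) X)"
proof -
  have "parent_edge' m \<notin> X" using pm X by (auto simp: parent_edge'_def)
  then have "outer_prod E' qs m X
      = qs (parent_edge' m) m * outer_prod E' qs m (insert (parent_edge' m) X)"
    using parent_edge'_props[OF mC] by (intro outer_prod_insert finite_E') auto
  moreover have "outer_prod E q m X
      = q (parent_edge m) m * outer_prod E q m (insert (parent_edge m) X)"
    using parent_edge_props[OF mC] pm by (intro outer_prod_insert finite_E) auto
  ultimately show ?thesis using outer_prod_qs_eq[OF mC X] by (simp add: algebra_simps)
qed

lemma branch_point_in_T':
  assumes xC: "x \<in> C" and bC: "\<beta> \<in> C" and k: "0 < k" and b: "branch_at k (\<gamma> x) (\<gamma> \<beta>)"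
  shows "gpath (V' \<union> A') E' x \<beta> = join_at k (\<gamma> x) (\<gamma> \<beta>)"
    and "path_weight E' qs (join_at k (\<gamma> x) (\<gamma> \<beta>))
      = outer_prod E' qs (\<gamma> x ! k) (set (edge_list (drop k (\<gamma> x))) \<union> set (edge_list (drop k (\<gamma> \<beta>))))
        * tail_prod E q k (\<gamma> x) * tail_prod E q k (\<gamma> \<beta>)"
proof -
  have path': "is_path (V' \<union> A') E' (\<gamma>' a)" "last (\<gamma>' a) = a" "distinct (\<gamma>' a)" if "a \<in> C" for a
    using gpath_is_path[OF tree', of \<alpha> a] tree_path_distinct[OF tree'] cells'_eq that by auto
  have same: "length (\<gamma>' a) = length (\<gamma> a)" "\<gamma>' a ! j = \<gamma> a ! j" "drop j (\<gamma>' a) = drop j (\<gamma> a)"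
    if "a \<in> C" "0 < j" for a j
    using root_path'_eq[OF that(1)] root_path_component[OF that(1)] that(2)
    by (simp_all add: drop_Cons' nth_Cons')
  have join: "join_at k (\<gamma>' x) (\<gamma>' \<beta>) = join_at k (\<gamma> x) (\<gamma> \<beta>)"
    using same(3)[OF xC k] same(3)[OF bC k] by (simp add: join_at_def)
  have b': "branch_at k (\<gamma>' x) (\<gamma>' \<beta>)"
    using b same[OF xC k] same[OF bC k] same(3)[OF xC zero_less_Suc] same(3)[OF bC zero_less_Suc]
    by (simp add: branch_at_def)
  show "gpath (V' \<union> A') E' x \<beta> = join_at k (\<gamma> x) (\<gamma> \<beta>)"
    using gpath_eq_join_at[OF tree' path'(1)[OF xC] path'(1)[OF bC] b'] path'(2) xC bC join by simp
  show "path_weight E' qs (join_at k (\<gamma> x) (\<gamma> \<beta>))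
      = outer_prod E' qs (\<gamma> x ! k) (set (edge_list (drop k (\<gamma> x))) \<union> set (edge_list (drop k (\<gamma> \<beta>))))
        * tail_prod E q k (\<gamma> x) * tail_prod E q k (\<gamma> \<beta>)"
    using path_weight_join_at[OF path'(3)[OF xC] path'(3)[OF bC] b'] join
      same[OF xC k] same(3)[OF bC k]
      tail_prod_qs_eq[OF xC k] tail_prod_qs_eq[OF bC k] by simp
qed

lemma path_weights_within_component:
  assumes xC: "x \<in> C" and bC: "\<beta> \<in> C" and bA: "\<beta> \<in> A" and xb: "x \<noteq> \<beta>"
  shows "path_weight E q (gpath G E x \<beta>) + path_weight E' qs (gpath (V' \<union> A') E' x \<beta>)
    = phid V A E q v0 x * path_weight E q (\<gamma> \<beta>)"
proof -
  have xG: "x \<in> G" and bG: "\<beta> \<in> G" using xC bC component_subset_cells by auto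
  have "\<beta> \<noteq> v0" using bC v0_notin_component by blast
  then obtain k where b: "branch_at k (\<gamma> x) (\<gamma> \<beta>)" and "0 < k"
    using root_paths_branch_point[OF xC bG] bC by blast
  define m where "m = \<gamma> x ! k"
  have k: "k < length (\<gamma> x)" "k < length (\<gamma> \<beta>)" and mb: "\<gamma> \<beta> ! k = m"
    using b by (auto simp: branch_at_def m_def)
  have m: "m \<in> V" "m \<in> C"
    using branch_cell_props[OF xC bC bA xb \<open>0 < k\<close> k m_def[symmetric] mb] by auto
  define D1 D2 where "D1 = set (edge_list (drop k (\<gamma> x)))" and "D2 = set (edge_list (drop k (\<gamma> \<beta>)))"
  define T where "T = tail_prod E q k (\<gamma> x) * tail_prod E q k (\<gamma> \<beta>)"
  define M where "M X = outer_prod E q m X" for X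
  have "gpath G E x \<beta> = join_at k (\<gamma> x) (\<gamma> \<beta>)"
    using gpath_eq_join_at[OF tree root_path_props(1)[OF xG] root_path_props(1)[OF bG] b]
      root_path_props(3)[OF xG] root_path_props(3)[OF bG] by simp
  then have "path_weight E q (gpath G E x \<beta>) + path_weight E' qs (gpath (V' \<union> A') E' x \<beta>)
      = (outer_prod E q m (D1 \<union> D2) + outer_prod E' qs m (D1 \<union> D2)) * T"
    using path_weight_join_at[OF root_path_props(4)[OF xG] root_path_props(4)[OF bG] b, of E q]
      branch_point_in_T'[OF xC bC \<open>0 < k\<close> b]
    by (simp add: m_def D1_def D2_def T_def algebra_simps)
  also have "\<dots> = (inner_phi m)^2 * M {parent_edge m} * M (insert (parent_edge m) (D1 \<union> D2)) * T"
  proof -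
    have "set (drop k (\<gamma> a)) \<subseteq> C" if "a \<in> C" for a
      using tl_root_path_component[OF that] set_drop_subset_set_drop[of 1 k "\<gamma> a"] \<open>0 < k\<close>
      by (simp add: drop_Suc)
    then have "\<forall>\<epsilon>\<in>D1 \<union> D2. v0 \<notin> \<epsilon> \<and> \<alpha> \<notin> \<epsilon>"
      using xC bC edge_list_subset v0_notin_component alpha_notin_component
      unfolding D1_def D2_def by blast
    moreover have "parent_edge m \<notin> D1 \<union> D2"
      using parent_edge_notin_tail_edges[OF xG k(1) m_def[symmetric] m(2)]
        parent_edge_notin_tail_edges[OF bG k(2) mb m(2)] by (simp add: D1_def D2_def)
    ultimately show ?thesis
      using outer_prod_sum_at_component[OF m(2)] parent_edge_sum[OF m(2,1)] by (simp add: M_def)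
  qed
  also have "\<dots> = inner_phi m * M (insert (parent_edge m) D1) * tail_prod E q k (\<gamma> x)
      * (inner_phi m * M (insert (parent_edge m) D2) * tail_prod E q k (\<gamma> \<beta>))"
  proof -
    have "D1 \<inter> D2 = {}"
      using edge_lists_disjoint_at_branch[OF tree root_path_props(1)[OF xG] b]
      by (simp add: D1_def D2_def)
    then have "M (insert (parent_edge m) D1) * M (insert (parent_edge m) D2)
        = M (insert (parent_edge m) (D1 \<union> D2)) * M {parent_edge m}"
      using outer_prod_Un_Int[OF finite_E, of q m "insert (parent_edge m) D1"
          "insert (parent_edge m) D2"]
      by (simp add: M_def insert_absorb)
    then show ?thesis by (simp add: T_def power2_eq_square algebra_simps)
  qed
  also have "\<dots> = phid V A E q v0 x * path_weight E q (\<gamma> \<beta>)"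
    using phid_split[OF xG \<open>0 < k\<close> k(1) m_def[symmetric] m(2)]
      phid_split[OF bG \<open>0 < k\<close> k(2) mb m(2)]
      path_weight_root_path[OF bG] by (simp add: M_def D1_def D2_def)
  finally show ?thesis .
qed

lemma N_sum_in_component:
  assumes xC: "x \<in> C" and x: "x \<in> V \<union> A0 A f"
  shows "Nd V A E f q x + Nd V' A' E' f' qs x = phid V A E q v0 x * degT V A E f q v0"
proof -
  have xG: "x \<in> G" using xC component_subset_cells by blast
  have v0G: "v0 \<in> G" using v0_in_V by blast
  have "finite A" using T by (simp add: decorated_tree_def)
  define S1 S2 where "S1 = (A - A0 A f) \<inter> C" and "S2 = (A - A0 A f) - C"
  have A_split: "A - A0 A f = S1 \<union> S2" "S1 \<inter> S2 = {}" "finite S1" "finite S2"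
    using \<open>finite A\<close> unfolding S1_def S2_def by auto
  have "\<alpha> \<notin> A" using fresh by blast
  then have A'_eq: "A' - A0 A' f' = S1" and f'_eq: "\<And>\<beta>. \<beta> \<in> S1 \<Longrightarrow> f' \<beta> = f \<beta>"
    unfolding S1_def att_A_def A0_def att_f_def by auto
  define ph where "ph = phid V A E q v0 x"
  have x_neq: "x \<noteq> \<beta>" if "\<beta> \<in> A - A0 A f" for \<beta>
    using that x disjoint_V_A by (auto simp: A0_def)
  have inside: "xva V A E f q x \<beta> + xva V' A' E' f' qs x \<beta> = ph * xva V A E f q v0 \<beta>"
    if b: "\<beta> \<in> S1" for \<beta>
  proof -
    have bC: "\<beta> \<in> C" and bA: "\<beta> \<in> A" and bG: "\<beta> \<in> G" using b by (auto simp: S1_def)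
    have "xva V' A' E' f' qs x \<beta> = f \<beta> * path_weight E' qs (gpath (V' \<union> A') E' x \<beta>)"
      using xva_eq_path_weight[OF tree'] xC bC cells'_eq f'_eq[OF b] by simp
    then show ?thesis
      using xva_eq_path_weight[OF tree xG bG] xva_eq_path_weight[OF tree v0G bG]
        path_weights_within_component[OF xC bC bA x_neq] b A_split(1)
      by (simp add: ph_def flip: distrib_left)
  qed
  have outside: "xva V A E f q x \<beta> = ph * xva V A E f q v0 \<beta>" if b: "\<beta> \<in> S2" for \<beta>
  proof -
    have bC: "\<beta> \<notin> C" and bA: "\<beta> \<in> A" and bG: "\<beta> \<in> G" using b by (auto simp: S2_def)
    have "\<beta> \<noteq> v0" using bA v0_in_V disjoint_V_A by blast
    then show ?thesis
      using xva_eq_path_weight[OF tree xG bG] xva_eq_path_weight[OF tree v0G bG]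
        path_weight_leaving_component[OF xC bG bC] by (simp add: ph_def)
  qed
  have "Nd V A E f q x + Nd V' A' E' f' qs x
      = (\<Sum>\<beta>\<in>S1. xva V A E f q x \<beta> + xva V' A' E' f' qs x \<beta>) + (\<Sum>\<beta>\<in>S2. xva V A E f q x \<beta>)"
    unfolding Nd_def A_split(1) A'_eq using A_split(2-4)
    by (simp add: sum.union_disjoint sum.distrib)
  also have "\<dots> = ph * degT V A E f q v0"
    using inside outside A_split unfolding degT_def Nd_def
    by (simp add: sum.union_disjoint sum_distrib_left distrib_left)
  finally show ?thesis unfolding ph_def .
qed

end

theorem lemma6p7:
  fixes V A :: "'a set" and E :: "'a set set" and f :: "'a \<Rightarrow> int"
    and q qs :: "'a set \<Rightarrow> 'a \<Rightarrow> int" and v0 u \<alpha> x :: 'a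
  assumes T: "decorated_tree V A E f q"
    and root: "is_root V A E q v0"
    and deg_pos: "valency E v0 > 0"
    and nbr: "{v0, u} \<in> E"
    and fresh: "\<alpha> \<notin> V \<union> A"
    and Ti: "att_q V A E f q v0 u \<alpha> qs"
    and x: "x \<in> (V - {v0}) \<union> A0 A f"
    and xi: "x \<in> att_V V E v0 u \<union> (A0 (att_A A E v0 u \<alpha>) (att_f f \<alpha>) - {\<alpha>})"
  shows "Nd V A E f q x
           + Nd (att_V V E v0 u) (att_A A E v0 u \<alpha>) (att_E E v0 u \<alpha>) (att_f f \<alpha>) qs x
         = phid V A E q v0 x * degT V A E f q v0"
proof -
  interpret attached_tree V A E f q qs v0 u \<alpha> using T root nbr fresh Ti by unfold_locales
  have "x \<in> comp_cells E v0 u" using xi by (auto simp: att_V_def att_A_def A0_def)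
  moreover have "x \<in> V \<union> A0 A f" using x by blast
  ultimately show ?thesis by (rule N_sum_in_component)
qed

end
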